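(* Let $A\in\mathbb{R}^{m\times n}$ with $m\ge n$ have singular value decomposition $A=U\Sigma V^T$ with singular values $\sigma_1\ge\cdots\ge\sigma_k>\theta>\sigma_{k+1}\ge\cdots\ge\sigma_n$ for a threshold $\theta>0$. Let $b\le k$, $q\ge0$ be integers, $\Omega_1$ an $n\times b$ standard Gaussian matrix, $\widehat Q_1\in\mathbb{R}^{m\times b}$ a matrix with orthonormal columns spanning the range of $(AA^T)^qA\Omega_1$, $\widehat U_1$ a $b\times b$ orthogonal matrix of eigenvectors of $\widehat Q_1^TAA^T\widehat Q_1$ (decreasing eigenvalue order), and $Q_1=\widehat Q_1\widehat U_1$. Let $\epsilon=\mathbf{d}(\mathcal{R}(Q_1),\mathcal{R}_\theta(A))$ and suppose \[\epsilon<1\quad\text{and}\quad \sigma_k-\epsilon\|A\|_2>\theta>\sigma_{k+1}+\epsilon\|A\|_2 .\] Let $B=(I_m-Q_1Q_1^T)A$. Then $B$ maintains the singular values of $A$ below $\theta$ with absolute error not exceeding $\epsilon\|A\|_2$, in the sense that $|\sigma_{k-b+i}(B)-\sigma_{k+i}|\le\epsilon\|A\|_2$ for $i=1,\dots,n-k$; and \[\mathrm{rank}_\theta(B)=\mathrm{rank}_\theta(A)-b .\]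
   Context: $\sigma_j(M)$ is the $j$-th largest singular value of $M$. The numerical range $\mathcal{R}_\theta(A)$ is the span of the first $k$ left singular vectors $u_1,\dots,u_k$ of $A$ (those with singular values $>\theta$), and $\mathrm{rank}_\theta(M)$ (numerical rank) is the number of singular values of $M$ exceeding $\theta$. For matrices $W,Z$ with orthonormal columns, $\mathbf{d}(\mathcal{R}(W),\mathcal{R}(Z))=\|(I-ZZ^T)WW^T\|_2$; for a subspace, use an orthonormal basis for $Z$. *)

theory Defs
  imports "Jordan_Normal_Form.Char_Poly" "HOL-Library.Multiset"
begin

definition sing_vals :: "real mat \<Rightarrow> real list" where
  "sing_vals M = map sqrt (rev (sorted_list_of_multiset (proots (char_poly (transpose_mat M * M)))))"

text \<open>sigma_j(M): the j-th largest singular value (1-indexed).\<close>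
definition sval :: "nat \<Rightarrow> real mat \<Rightarrow> real" where
  "sval j M = sing_vals M ! (j - 1)"

definition rank_theta :: "real \<Rightarrow> real mat \<Rightarrow> nat" where
  "rank_theta \<theta> M = length (filter (\<lambda>s. s > \<theta>) (sing_vals M))"

definition vnorm :: "real vec \<Rightarrow> real" where
  "vnorm v = sqrt (v \<bullet> v)"

definition norm2 :: "real mat \<Rightarrow> real" where
  "norm2 M = Sup {vnorm (M *\<^sub>v x) | x. x \<in> carrier_vec (dim_col M) \<and> vnorm x = 1}"

definition colspace :: "real mat \<Rightarrow> real vec set" where
  "colspace M = {M *\<^sub>v x | x. x \<in> carrier_vec (dim_col M)}"

text \<open>Distance between ranges of matrices W, Z with orthonormal columns:
  d(R(W),R(Z)) = || (I - Z Z^T) W W^T ||_2.\<close>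
definition subspace_dist :: "real mat \<Rightarrow> real mat \<Rightarrow> real" where
  "subspace_dist W Z =
     norm2 ((1\<^sub>m (dim_row W) - Z * transpose_mat Z) * (W * transpose_mat W))"

definition first_cols :: "nat \<Rightarrow> real mat \<Rightarrow> real mat" where
  "first_cols k U = mat (dim_row U) k (\<lambda>(i,j). U $$ (i,j))"

end

theory Submission
  imports Defs "Jordan_Normal_Form.Schur_Decomposition"
begin

text \<open>Write \<open>Q = Qh Uh\<close> and \<open>B = (I - Q Q\<^sup>T) A\<close>. Everything follows from the two-sided interlacing
  \<open>\<sigma>\<^sub>l(A) \<le> \<sigma>\<^sub>l\<^sub>-\<^sub>b(B) \<le> \<sigma>\<^sub>l(A) + \<epsilon> \<parallel>A\<parallel>\<close> for \<open>k < l \<le> n\<close>, obtained from the Courant-Fischer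
  min-max principle.
  For the lower bound, a vector \<open>x\<close> orthogonal to the right singular vectors beyond \<open>v\<^sub>l\<close> and with
  \<open>Q\<^sup>T A x = 0\<close> satisfies \<open>B x = A x\<close>; these are \<open>n - l + b\<close> linear conditions, leaving room for
  the \<open>l - b - 1\<close> further ones of the min-max principle.
  For the upper bound, one solves \<open>U\<^sub>k\<^sup>T A x = U\<^sub>k\<^sup>T Q z\<close> with \<open>x \<bottom> v\<^sub>k\<^sub>+\<^sub>1, \<dots>, v\<^sub>l\<^sub>-\<^sub>1\<close>. The component
  of \<open>A x\<close> in \<open>R(U\<^sub>k)\<close> is then the projection of \<open>Q z\<close>, which \<open>I - Q Q\<^sup>T\<close> shrinks by the factor \<open>\<epsilon>\<close>,
  and the other component has norm at most \<open>\<sigma>\<^sub>l(A) |x|\<close>; \<open>\<epsilon> < 1\<close> guarantees \<open>x \<noteq> 0\<close>.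
  The numerical ranks are read off from these bounds and the gaps around \<open>\<theta>\<close>; when \<open>k = n\<close>,
  \<open>R(Q) \<subseteq> R(A)\<close> gives \<open>B\<close> the \<open>b\<close> zero singular values needed.\<close>

section \<open>Euclidean norm, orthonormal columns and projectors\<close>

lemma sprod_self_nonneg: "0 \<le> (v :: real vec) \<bullet> v"
  using conjugate_square_ge_0_vec[of v] by simp

lemma sprod_self_eq_0_iff: "(v :: real vec) \<in> carrier_vec n \<Longrightarrow> v \<bullet> v = 0 \<longleftrightarrow> v = 0\<^sub>v n"
  using conjugate_square_eq_0_vec[of v n] by simp

lemma sprod_self_pos: "(v :: real vec) \<in> carrier_vec n \<Longrightarrow> v \<noteq> 0\<^sub>v n \<Longrightarrow> 0 < v \<bullet> v"
  using sprod_self_nonneg[of v] sprod_self_eq_0_iff[of v n] by linarith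

lemma sprod_self_eq_sum: "(v :: real vec) \<in> carrier_vec n \<Longrightarrow> v \<bullet> v = (\<Sum>r<n. (v $ r)\<^sup>2)"
  unfolding scalar_prod_def power2_eq_square by (simp add: lessThan_atLeast0)

lemma vnorm_nonneg: "0 \<le> vnorm v"
  unfolding vnorm_def using sprod_self_nonneg by simp

lemma vnorm_sq: "(vnorm v)\<^sup>2 = v \<bullet> v"
  unfolding vnorm_def using sprod_self_nonneg by simp

lemma vnorm_smult: "vnorm (a \<cdot>\<^sub>v v) = \<bar>a\<bar> * vnorm v"
proof -
  have "(a \<cdot>\<^sub>v v) \<bullet> (a \<cdot>\<^sub>v v) = a\<^sup>2 * (v \<bullet> v)"
    unfolding scalar_prod_def by (simp add: sum_distrib_left power2_eq_square algebra_simps)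
  then show ?thesis unfolding vnorm_def by (simp add: real_sqrt_mult)
qed

lemma mult_vnorm_eq_sqrt: "0 \<le> c \<Longrightarrow> c * vnorm x = sqrt (c\<^sup>2 * (x \<bullet> x))"
  unfolding vnorm_def by (simp add: real_sqrt_mult)

lemma mult_vnorm_le_vnorm_iff:
  "0 \<le> c \<Longrightarrow> c * vnorm x \<le> vnorm y \<longleftrightarrow> c\<^sup>2 * (x \<bullet> x) \<le> y \<bullet> y"
  by (subst mult_vnorm_eq_sqrt) (simp_all add: vnorm_def)

lemma vnorm_le_mult_vnorm_iff:
  "0 \<le> c \<Longrightarrow> vnorm y \<le> c * vnorm x \<longleftrightarrow> y \<bullet> y \<le> c\<^sup>2 * (x \<bullet> x)"
  by (subst mult_vnorm_eq_sqrt) (simp_all add: vnorm_def)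

lemma sum_Cauchy_Schwarz:
  fixes f g :: "'a \<Rightarrow> real"
  shows "(\<Sum>i\<in>I. f i * g i)\<^sup>2 \<le> (\<Sum>i\<in>I. (f i)\<^sup>2) * (\<Sum>i\<in>I. (g i)\<^sup>2)"
proof -
  define a b c where "a = (\<Sum>i\<in>I. (f i)\<^sup>2)" and "b = (\<Sum>i\<in>I. f i * g i)" and "c = (\<Sum>i\<in>I. (g i)\<^sup>2)"
  have "0 \<le> (\<Sum>i\<in>I. (c * f i - b * g i)\<^sup>2)"
    by (intro sum_nonneg) auto
  also have "\<dots> = c\<^sup>2 * (\<Sum>i\<in>I. (f i)\<^sup>2) - 2 * c * b * (\<Sum>i\<in>I. f i * g i) + b\<^sup>2 * (\<Sum>i\<in>I. (g i)\<^sup>2)"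
    by (simp add: power2_eq_square algebra_simps sum.distrib sum_subtractf sum_distrib_left)
  also have "\<dots> = c * (c * a - b\<^sup>2)"
    unfolding a_def[symmetric] b_def[symmetric] c_def[symmetric] by (simp add: power2_eq_square algebra_simps)
  finally have "0 \<le> c * (c * a - b\<^sup>2)" .
  moreover have "0 \<le> c"
    unfolding c_def by (intro sum_nonneg) auto
  moreover have "b = 0" if "c = 0"
  proof (cases "finite I")
    case True
    then have "\<forall>i\<in>I. (g i)\<^sup>2 = 0"
      using that unfolding c_def by (subst sum_nonneg_eq_0_iff[symmetric]) auto
    then show ?thesis unfolding b_def by simp
  qed (simp add: b_def)
  ultimately have "b\<^sup>2 \<le> a * c"
    by (cases "c = 0") (auto simp: zero_le_mult_iff algebra_simps)
  then show ?thesis unfolding a_def b_def c_def .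
qed

lemma scalar_prod_Cauchy_Schwarz:
  assumes "v \<in> carrier_vec n" "w \<in> carrier_vec n"
  shows "(v \<bullet> w)\<^sup>2 \<le> (v \<bullet> v) * ((w :: real vec) \<bullet> w)"
  using sum_Cauchy_Schwarz[of "\<lambda>i. v $ i" "\<lambda>i. w $ i" "{0..<n}"] assms
  unfolding scalar_prod_def by (simp add: power2_eq_square)

lemma abs_scalar_prod_le_vnorm:
  assumes "v \<in> carrier_vec n" "w \<in> carrier_vec n"
  shows "\<bar>v \<bullet> w\<bar> \<le> vnorm v * vnorm (w :: real vec)"
proof -
  have "\<bar>v \<bullet> w\<bar>\<^sup>2 \<le> (vnorm v * vnorm w)\<^sup>2"
    using scalar_prod_Cauchy_Schwarz[OF assms] by (simp add: power_mult_distrib vnorm_sq)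
  then show ?thesis
    using vnorm_nonneg by (meson abs_ge_zero mult_nonneg_nonneg power2_le_imp_le)
qed

lemma vnorm_triangle:
  assumes v: "v \<in> carrier_vec n" and w: "w \<in> carrier_vec n"
  shows "vnorm (v + w) \<le> vnorm v + vnorm (w :: real vec)"
proof -
  have "(v + w) \<bullet> (v + w) = v \<bullet> v + 2 * (v \<bullet> w) + w \<bullet> w"
    using v w by (simp add: add_scalar_prod_distrib[of _ n] scalar_prod_add_distrib[of _ n]
        comm_scalar_prod[of w n v])
  also have "\<dots> \<le> (vnorm v)\<^sup>2 + 2 * (vnorm v * vnorm w) + (vnorm w)\<^sup>2"
    using abs_scalar_prod_le_vnorm[OF v w] by (simp add: vnorm_sq)
  also have "\<dots> = (vnorm v + vnorm w)\<^sup>2"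
    by (simp add: power2_eq_square algebra_simps)
  finally show ?thesis
    using vnorm_nonneg by (metis add_nonneg_nonneg power2_le_imp_le vnorm_sq)
qed

lemma sprod_mult_mat_vec:
  assumes "X \<in> carrier_mat r c" "x \<in> carrier_vec c" "y \<in> carrier_vec r"
  shows "y \<bullet> (X *\<^sub>v x) = (transpose_mat X *\<^sub>v y) \<bullet> (x :: real vec)"
  using transpose_vec_mult_scalar[OF assms] by simp

lemma sprod_mult_mat_vec_self:
  assumes X: "X \<in> carrier_mat r c" and x: "x \<in> carrier_vec c"
  shows "(X *\<^sub>v x) \<bullet> (X *\<^sub>v x) = x \<bullet> ((transpose_mat X * X) *\<^sub>v (x :: real vec))"
proof -
  have "(X *\<^sub>v x) \<bullet> (X *\<^sub>v x) = (transpose_mat X *\<^sub>v (X *\<^sub>v x)) \<bullet> x"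
    using sprod_mult_mat_vec[OF X x mult_mat_vec_carrier[OF X x]] .
  also have "\<dots> = x \<bullet> ((transpose_mat X * X) *\<^sub>v x)"
    using X x by (subst comm_scalar_prod[of _ c]) auto
  finally show ?thesis .
qed

lemma orthonormal_cols_cancel:
  assumes "X \<in> carrier_mat r c" "transpose_mat X * X = 1\<^sub>m c" "x \<in> carrier_vec c"
  shows "transpose_mat X *\<^sub>v (X *\<^sub>v x) = (x :: real vec)"
  using assms by (simp add: assoc_mult_mat_vec[of _ c r _ c, symmetric])

lemma orthogonal_mat_mult_transpose:
  assumes "X \<in> carrier_mat n n" "transpose_mat X * X = 1\<^sub>m n"
  shows "X * transpose_mat X = (1\<^sub>m n :: real mat)"
  using mat_mult_left_right_inverse[of "transpose_mat X" n X] assms by auto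

lemma orthogonal_mat_cancel:
  assumes X: "X \<in> carrier_mat n n" "transpose_mat X * X = 1\<^sub>m n" and x: "x \<in> carrier_vec n"
  shows "X *\<^sub>v (transpose_mat X *\<^sub>v x) = (x :: real vec)"
  using orthogonal_mat_mult_transpose[OF X] X x by (simp add: assoc_mult_mat_vec[of _ n n _ n, symmetric])

lemma orthonormal_cols_sprod:
  assumes "X \<in> carrier_mat r c" "transpose_mat X * X = 1\<^sub>m c" "x \<in> carrier_vec c"
  shows "(X *\<^sub>v x) \<bullet> (X *\<^sub>v x) = x \<bullet> (x :: real vec)"
  using sprod_mult_mat_vec_self[OF assms(1,3)] assms by simp

lemma orthonormal_cols_vnorm:
  assumes "X \<in> carrier_mat r c" "transpose_mat X * X = 1\<^sub>m c" "x \<in> carrier_vec c"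
  shows "vnorm (X *\<^sub>v x) = vnorm (x :: real vec)"
  using orthonormal_cols_sprod[OF assms] unfolding vnorm_def by simp

lemma projector_mult_vec:
  assumes X: "X \<in> carrier_mat m c" and w: "w \<in> carrier_vec m"
  shows "(1\<^sub>m m - X * transpose_mat X) *\<^sub>v w = w - X *\<^sub>v (transpose_mat X *\<^sub>v (w :: real vec))"
  using X w by (simp add: minus_mult_distrib_mat_vec[of _ m m] assoc_mult_mat_vec[of _ m c _ m])

lemma projector_sprod:
  assumes X: "X \<in> carrier_mat m c" "transpose_mat X * X = 1\<^sub>m c" and w: "w \<in> carrier_vec m"
  shows "((1\<^sub>m m - X * transpose_mat X) *\<^sub>v w) \<bullet> ((1\<^sub>m m - X * transpose_mat X) *\<^sub>v w)
     = w \<bullet> w - (transpose_mat X *\<^sub>v w) \<bullet> (transpose_mat X *\<^sub>v (w :: real vec))"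
proof -
  define v where "v = transpose_mat X *\<^sub>v w"
  have v: "v \<in> carrier_vec c" and Xv: "X *\<^sub>v v \<in> carrier_vec m"
    unfolding v_def using X w by auto
  have wXv: "w \<bullet> (X *\<^sub>v v) = v \<bullet> v" and Xvw: "(X *\<^sub>v v) \<bullet> w = v \<bullet> v"
    using sprod_mult_mat_vec[OF X(1) v w] comm_scalar_prod[OF w Xv] unfolding v_def by simp_all
  have "(w - X *\<^sub>v v) \<bullet> (w - X *\<^sub>v v)
      = w \<bullet> w - w \<bullet> (X *\<^sub>v v) - ((X *\<^sub>v v) \<bullet> w - (X *\<^sub>v v) \<bullet> (X *\<^sub>v v))"
    using w Xv by (simp add: minus_scalar_prod_distrib[of _ m] scalar_prod_minus_distrib[of _ m])
  also have "\<dots> = w \<bullet> w - v \<bullet> v"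
    unfolding wXv Xvw orthonormal_cols_sprod[OF X v] by simp
  finally show ?thesis unfolding projector_mult_vec[OF X(1) w] v_def .
qed

lemma projector_add_complement:
  assumes X: "X \<in> carrier_mat m c" and w: "w \<in> carrier_vec m"
  shows "(X * transpose_mat X) *\<^sub>v w + (1\<^sub>m m - X * transpose_mat X) *\<^sub>v w = (w :: real vec)"
  using X w by (simp add: minus_mult_distrib_mat_vec[of _ m m] assoc_mult_mat_vec[of _ m c _ m])
    (intro eq_vecI, auto)

lemma vnorm_projection_le:
  assumes X: "X \<in> carrier_mat m c" "transpose_mat X * X = 1\<^sub>m c" and w: "w \<in> carrier_vec m"
  shows "vnorm ((X * transpose_mat X) *\<^sub>v w) \<le> vnorm (w :: real vec)"
proof -
  have "(X * transpose_mat X) *\<^sub>v w = X *\<^sub>v (transpose_mat X *\<^sub>v w)"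
    using X w by (simp add: assoc_mult_mat_vec[of _ m c _ m])
  then have "vnorm ((X * transpose_mat X) *\<^sub>v w) = vnorm (transpose_mat X *\<^sub>v w)"
    using orthonormal_cols_vnorm[OF X] X w by simp
  also have "\<dots> \<le> vnorm w"
    using projector_sprod[OF X w] sprod_self_nonneg[of "(1\<^sub>m m - X * transpose_mat X) *\<^sub>v w"]
    unfolding vnorm_def by simp
  finally show ?thesis .
qed

lemma projector_vnorm_le:
  assumes "X \<in> carrier_mat m c" "transpose_mat X * X = 1\<^sub>m c" "w \<in> carrier_vec m"
  shows "vnorm ((1\<^sub>m m - X * transpose_mat X) *\<^sub>v w) \<le> vnorm (w :: real vec)"
  using projector_sprod[OF assms] sprod_self_nonneg[of "transpose_mat X *\<^sub>v w"]
  unfolding vnorm_def by simp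

lemma projection_mult_range:
  assumes X: "X \<in> carrier_mat m c" "transpose_mat X * X = 1\<^sub>m c" and z: "z \<in> carrier_vec c"
  shows "(X * transpose_mat X) *\<^sub>v (X *\<^sub>v z) = (X *\<^sub>v (z :: real vec))"
  using X z by (simp add: assoc_mult_mat_vec[of _ m c _ m] orthonormal_cols_cancel)

lemma projector_mult_range:
  assumes X: "X \<in> carrier_mat m c" "transpose_mat X * X = 1\<^sub>m c" and z: "z \<in> carrier_vec c"
  shows "(1\<^sub>m m - X * transpose_mat X) *\<^sub>v (X *\<^sub>v z) = (0\<^sub>v m :: real vec)"
proof -
  have Xz: "X *\<^sub>v z \<in> carrier_vec m"
    using X z by auto
  then have "(1\<^sub>m m - X * transpose_mat X) *\<^sub>v (X *\<^sub>v z) = X *\<^sub>v z - X *\<^sub>v (transpose_mat X *\<^sub>v (X *\<^sub>v z))"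
    by (rule projector_mult_vec[OF X(1)])
  also have "\<dots> = 0\<^sub>v m"
    unfolding orthonormal_cols_cancel[OF X z] using Xz by (intro eq_vecI) auto
  finally show ?thesis .
qed

lemma vnorm_mult_mat_vec_le_Frobenius:
  assumes M: "M \<in> carrier_mat r c" and x: "x \<in> carrier_vec c"
  shows "vnorm (M *\<^sub>v x) \<le> sqrt (\<Sum>i<r. row M i \<bullet> row M i) * vnorm (x :: real vec)"
proof -
  have "(M *\<^sub>v x) \<bullet> (M *\<^sub>v x) = (\<Sum>i<r. ((M *\<^sub>v x) $ i)\<^sup>2)"
    by (rule sprod_self_eq_sum) (use M x in auto)
  also have "\<dots> = (\<Sum>i<r. (row M i \<bullet> x)\<^sup>2)"
    using M by (intro sum.cong) auto
  also have "\<dots> \<le> (\<Sum>i<r. (row M i \<bullet> row M i) * (x \<bullet> x))"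
    by (intro sum_mono scalar_prod_Cauchy_Schwarz[of _ c]) (use M x in auto)
  also have "\<dots> = (sqrt (\<Sum>i<r. row M i \<bullet> row M i) * vnorm x)\<^sup>2"
    by (simp add: sum_distrib_right power_mult_distrib vnorm_sq sum_nonneg sprod_self_nonneg)
  finally have "(vnorm (M *\<^sub>v x))\<^sup>2 \<le> (sqrt (\<Sum>i<r. row M i \<bullet> row M i) * vnorm x)\<^sup>2"
    unfolding vnorm_sq .
  then show ?thesis
    by (rule power2_le_imp_le) (simp add: vnorm_nonneg sum_nonneg sprod_self_nonneg)
qed

lemma norm2_upper:
  assumes M: "M \<in> carrier_mat r c" and x: "x \<in> carrier_vec c" and x1: "vnorm x = 1"
  shows "vnorm (M *\<^sub>v x) \<le> norm2 M"
proof -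
  define F where "F = sqrt (\<Sum>i<r. row M i \<bullet> row M i)"
  have "vnorm (M *\<^sub>v y) \<le> F" if "y \<in> carrier_vec c" "vnorm y = 1" for y
    using vnorm_mult_mat_vec_le_Frobenius[OF M that(1)] that(2) unfolding F_def by simp
  then have "bdd_above {vnorm (M *\<^sub>v x) | x. x \<in> carrier_vec c \<and> vnorm x = 1}"
    by (intro bdd_aboveI[where M = F]) blast
  moreover have "vnorm (M *\<^sub>v x) \<in> {vnorm (M *\<^sub>v x) | x. x \<in> carrier_vec c \<and> vnorm x = 1}"
    using x x1 by blast
  ultimately show ?thesis
    unfolding norm2_def using M by (simp add: cSup_upper)
qed

lemma vnorm_mult_mat_vec_le_norm2:
  assumes M: "M \<in> carrier_mat r c" and x: "x \<in> carrier_vec c"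
  shows "vnorm (M *\<^sub>v x) \<le> norm2 M * vnorm (x :: real vec)"
proof (cases "vnorm x = 0")
  case True
  then have "x = 0\<^sub>v c"
    using sprod_self_eq_0_iff[OF x] vnorm_sq[of x] by simp
  then have "M *\<^sub>v x = 0\<^sub>v r"
    using M by (intro eq_vecI) auto
  then show ?thesis
    using True by (simp add: vnorm_def)
next
  case False
  then have pos: "0 < vnorm x"
    using vnorm_nonneg[of x] by simp
  have "(1 / vnorm x) * vnorm (M *\<^sub>v x) = vnorm (M *\<^sub>v ((1 / vnorm x) \<cdot>\<^sub>v x))"
    using M x pos by (simp add: vnorm_smult mult_mat_vec)
  also have "\<dots> \<le> norm2 M"
    by (rule norm2_upper[OF M]) (use x pos in \<open>auto simp: vnorm_smult\<close>)
  finally show ?thesis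
    using pos by (simp add: field_simps)
qed

lemma norm2_nonneg:
  assumes "M \<in> carrier_mat r c" "0 < c"
  shows "0 \<le> norm2 M"
proof -
  have "vnorm (unit_vec c 0 :: real vec) = 1"
    using assms(2) by (simp add: vnorm_def)
  then show ?thesis
    using norm2_upper[OF assms(1), of "unit_vec c 0"] vnorm_nonneg[of "M *\<^sub>v unit_vec c 0"]
    by simp
qed

section \<open>Spectral theorem for real symmetric matrices\<close>

lemma eigenvalue_of_real_symmetric_is_real:
  fixes M :: "real mat"
  assumes M: "M \<in> carrier_mat n n" and sym: "transpose_mat M = M"
    and v: "v \<in> carrier_vec n" "v \<noteq> 0\<^sub>v n" "map_mat complex_of_real M *\<^sub>v v = l \<cdot>\<^sub>v v"
  shows "l = of_real (Re l)"
proof -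
  \<comment> \<open>the Hermitian form \<open>v\<^sup>* M v\<close> equals \<open>l |v|\<^sup>2\<close> and is real\<close>
  define s where "s = (\<Sum>i<n. \<Sum>j<n. cnj (v $ i) * of_real (M $$ (i,j)) * v $ j)"
  define c where "c = (\<Sum>i<n. (cmod (v $ i))\<^sup>2)"
  have row: "(\<Sum>j<n. of_real (M $$ (i,j)) * v $ j) = l * v $ i" if i: "i < n" for i
    using arg_cong[OF v(3), of "\<lambda>w. w $ i"] i M v(1) by (simp add: scalar_prod_def lessThan_atLeast0)
  have "s = (\<Sum>i<n. cnj (v $ i) * (\<Sum>j<n. of_real (M $$ (i,j)) * v $ j))"
    unfolding s_def by (simp add: sum_distrib_left mult.assoc)
  also have "\<dots> = (\<Sum>i<n. cnj (v $ i) * (l * v $ i))"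
    using row by simp
  also have "\<dots> = l * (\<Sum>i<n. cnj (v $ i) * v $ i)"
    by (simp add: sum_distrib_left algebra_simps)
  also have "(\<Sum>i<n. cnj (v $ i) * v $ i) = of_real c"
    unfolding c_def by (simp add: complex_mult_cnj cmod_def mult.commute)
  finally have s_eq: "s = l * of_real c" .
  have M_sym: "M $$ (j,i) = M $$ (i,j)" if "i < n" "j < n" for i j
    using arg_cong[OF sym, of "\<lambda>A. A $$ (i,j)"] that M by auto
  have "cnj s = (\<Sum>i<n. \<Sum>j<n. v $ i * of_real (M $$ (i,j)) * cnj (v $ j))"
    unfolding s_def by simp
  also have "\<dots> = (\<Sum>j<n. \<Sum>i<n. v $ i * of_real (M $$ (i,j)) * cnj (v $ j))"
    by (rule sum.swap)
  also have "\<dots> = s"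
    unfolding s_def by (intro sum.cong refl) (simp add: M_sym algebra_simps)
  finally have "cnj l * of_real c = l * of_real c"
    using s_eq by simp
  moreover have "c \<noteq> 0"
  proof
    assume "c = 0"
    then have "\<forall>i\<in>{..<n}. (cmod (v $ i))\<^sup>2 = 0"
      unfolding c_def by (subst sum_nonneg_eq_0_iff[symmetric]) auto
    then have "v = 0\<^sub>v n"
      using v(1) by (intro eq_vecI) auto
    with v(2) show False ..
  qed
  ultimately have "Im l = 0"
    by (metis cnj.sel(2) mult_cancel_right neg_equal_zero of_real_eq_0_iff)
  then show ?thesis
    by (simp add: complex_eqI)
qed

lemma symmetric_mat_has_real_eigenvalue:
  fixes M :: "real mat"
  assumes M: "M \<in> carrier_mat n n" and sym: "transpose_mat M = M" and n: "0 < n"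
  shows "\<exists>e. poly (char_poly M) e = 0"
proof -
  define Mc where "Mc = map_mat complex_of_real M"
  have Mc: "Mc \<in> carrier_mat n n"
    using M unfolding Mc_def by auto
  have "degree (char_poly Mc) = n"
    using degree_monic_char_poly[OF Mc] by simp
  then obtain l where l: "poly (char_poly Mc) l = 0"
    using fundamental_theorem_of_algebra n by (metis constant_degree neq0_conv)
  then obtain v where "v \<in> carrier_vec n" "v \<noteq> 0\<^sub>v n" "Mc *\<^sub>v v = l \<cdot>\<^sub>v v"
    using eigenvalue_root_char_poly[OF Mc] Mc unfolding eigenvalue_def eigenvector_def by auto
  then have lr: "l = of_real (Re l)"
    unfolding Mc_def by (rule eigenvalue_of_real_symmetric_is_real[OF M sym])
  have "poly (char_poly Mc) l = of_real (poly (char_poly M) (Re l))"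
    unfolding Mc_def of_real_hom.char_poly_hom[OF M] by (subst (1) lr) (rule of_real_hom.poly_map_poly)
  with l show ?thesis
    by auto
qed

lemma orthogonal_mat_of_normalized_cols:
  fixes ws :: "real vec list"
  assumes len: "length ws = n" and wsc: "set ws \<subseteq> carrier_vec n"
    and orth: "\<And>i j. i < n \<Longrightarrow> j < n \<Longrightarrow> ws ! i \<bullet> ws ! j = 0 \<longleftrightarrow> i \<noteq> j"
  defines "W \<equiv> mat_of_cols n (map (\<lambda>w. (1 / vnorm w) \<cdot>\<^sub>v w) ws)"
  shows "W \<in> carrier_mat n n" and "transpose_mat W * W = 1\<^sub>m n"
    and "\<And>i. i < n \<Longrightarrow> col W i = (1 / vnorm (ws ! i)) \<cdot>\<^sub>v ws ! i"
proof -
  show W: "W \<in> carrier_mat n n"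
    unfolding W_def using len by auto
  show colW: "col W i = (1 / vnorm (ws ! i)) \<cdot>\<^sub>v ws ! i" if "i < n" for i
    unfolding W_def using that len wsc by (subst col_mat_of_cols) auto
  show "transpose_mat W * W = 1\<^sub>m n"
  proof (rule eq_matI)
    fix i j assume "i < dim_row (1\<^sub>m n :: real mat)" "j < dim_col (1\<^sub>m n :: real mat)"
    then have i: "i < n" and j: "j < n"
      by auto
    moreover have "ws ! i \<in> carrier_vec n" "ws ! j \<in> carrier_vec n"
      using wsc len i j nth_mem by blast+
    ultimately have "(transpose_mat W * W) $$ (i,j) = (1 / vnorm (ws ! i)) * (1 / vnorm (ws ! j)) * (ws ! i \<bullet> ws ! j)"
      using W colW[OF i] colW[OF j] by simp
    also have "\<dots> = 1\<^sub>m n $$ (i,j)"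
      using orth[OF i j] orth[OF i i] i j vnorm_sq[of "ws ! i"] by (auto simp: power2_eq_square)
    finally show "(transpose_mat W * W) $$ (i,j) = 1\<^sub>m n $$ (i,j)" .
  qed (use W in auto)
qed

lemma orthogonal_mat_with_first_col:
  fixes u :: "real vec"
  assumes u: "u \<in> carrier_vec n" and u1: "u \<bullet> u = 1"
  obtains W where "W \<in> carrier_mat n n" "transpose_mat W * W = 1\<^sub>m n" "col W 0 = u"
proof -
  have n: "0 < n"
    using u u1 by (cases n) (auto simp: scalar_prod_def)
  have u0: "u \<noteq> 0\<^sub>v n"
    using u1 by auto
  interpret cof_vec_space n "TYPE(real)" .
  define bs where "bs = basis_completion u"
  note bc = basis_completion[OF u u0, folded bs_def]
  define ws where "ws = gram_schmidt n bs"
  note gs = gram_schmidt_result[OF bc(2) bc(4) bc(5) ws_def]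
  obtain rest where bs_eq: "bs = u # rest"
    using bc(6,7) n by (cases bs) auto
  have len: "length ws = n"
    using gs(4) bc(6) by simp
  have "hd ws = u"
    unfolding ws_def bs_eq using u by simp
  then have ws0: "ws ! 0 = u"
    using len n by (metis hd_conv_nth list.size(3) not_less0)
  have orth: "ws ! i \<bullet> ws ! j = 0 \<longleftrightarrow> i \<noteq> j" if "i < n" "j < n" for i j
    using gs(2) that len unfolding corthogonal_def by (auto simp: scalar_prod_def)
  define W where "W = mat_of_cols n (map (\<lambda>w. (1 / vnorm w) \<cdot>\<^sub>v w) ws)"
  have W: "W \<in> carrier_mat n n" "transpose_mat W * W = 1\<^sub>m n" "col W 0 = (1 / vnorm (ws ! 0)) \<cdot>\<^sub>v ws ! 0"
    unfolding W_def using orthogonal_mat_of_normalized_cols[of ws n] len gs(3) orth n by auto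
  show ?thesis
    by (rule that[OF W(1,2)]) (use W(3) ws0 u1 in \<open>simp add: vnorm_def\<close>)
qed

definition mat_of_diag :: "nat \<Rightarrow> (nat \<Rightarrow> real) \<Rightarrow> real mat" where
  "mat_of_diag n d = mat n n (\<lambda>(i,j). if i = j then d i else 0)"

lemma mat_of_diag_carrier [simp]: "mat_of_diag n d \<in> carrier_mat n n"
  and dim_mat_of_diag [simp]: "dim_row (mat_of_diag n d) = n" "dim_col (mat_of_diag n d) = n"
  unfolding mat_of_diag_def by auto

lemma char_poly_orthogonal_conj:
  assumes W: "W \<in> carrier_mat n n" "transpose_mat W * W = 1\<^sub>m n"
    and D: "D \<in> carrier_mat n n" and M: "M = W * D * transpose_mat W"
  shows "char_poly M = char_poly (D :: real mat)"
proof -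
  have "similar_mat_wit M D W (transpose_mat W)"
    unfolding similar_mat_wit_def Let_def using W D M orthogonal_mat_mult_transpose[OF W] by auto
  then show ?thesis
    by (intro char_poly_similar) (auto simp: similar_mat_def)
qed

lemma mult_block_diag_mat:
  assumes "A1 \<in> carrier_mat p p" "A2 \<in> carrier_mat p p" "D1 \<in> carrier_mat k k" "D2 \<in> carrier_mat k k"
  shows "four_block_mat A1 (0\<^sub>m p k) (0\<^sub>m k p) D1 * four_block_mat A2 (0\<^sub>m p k) (0\<^sub>m k p) D2
    = four_block_mat (A1 * A2) (0\<^sub>m p k) (0\<^sub>m k p) (D1 * (D2 :: real mat))"
  using assms
  by (subst mult_four_block_mat[where ?nr1.0=p and ?n1.0=p and ?nr2.0=k and ?n2.0=k and ?nc1.0=p and ?nc2.0=k])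
    auto

lemma block_diag_mat_conj:
  assumes "E \<in> carrier_mat p p" "D \<in> carrier_mat k k" "W \<in> carrier_mat k k"
  shows "four_block_mat (1\<^sub>m p) (0\<^sub>m p k) (0\<^sub>m k p) W * four_block_mat E (0\<^sub>m p k) (0\<^sub>m k p) D
      * four_block_mat (1\<^sub>m p) (0\<^sub>m p k) (0\<^sub>m k p) (transpose_mat W)
    = four_block_mat E (0\<^sub>m p k) (0\<^sub>m k p) (W * D * transpose_mat (W :: real mat))"
  using assms by (simp add: mult_block_diag_mat[where p = p and k = k])

lemma mult_conj_mat_assoc:
  assumes "A \<in> carrier_mat n n" "B \<in> carrier_mat n n" "D \<in> carrier_mat n n"
  shows "A * B * D * transpose_mat (A * B) = A * (B * D * transpose_mat B) * transpose_mat (A :: real mat)"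
proof -
  have "A * B * D * transpose_mat (A * B) = A * B * D * (transpose_mat B * transpose_mat A)"
    using assms by (simp add: transpose_mult)
  also have "\<dots> = A * (B * D * transpose_mat B) * transpose_mat A"
    using assms by (simp add: assoc_mult_mat[of _ n n _ n _ n])
  finally show ?thesis .
qed

lemma gram_mat_mult:
  assumes Y: "Y \<in> carrier_mat p q" and Z: "Z \<in> carrier_mat q r"
  shows "transpose_mat (Y * Z) * (Y * Z) = transpose_mat Z * (transpose_mat Y * Y) * (Z :: real mat)"
proof -
  have "transpose_mat (Y * Z) * (Y * Z) = transpose_mat Z * (transpose_mat Y * (Y * Z))"
    using Y Z by (simp add: transpose_mult[OF Y Z] assoc_mult_mat[of _ r q _ p _ r])
  also have "transpose_mat Y * (Y * Z) = (transpose_mat Y * Y) * Z"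
    by (rule assoc_mult_mat[symmetric]) (use Y Z in auto)
  finally show ?thesis
    using Y Z by (simp add: assoc_mult_mat[of _ r q _ q _ r])
qed

lemma orthogonal_mat_mult:
  assumes A: "A \<in> carrier_mat n n" "transpose_mat A * A = 1\<^sub>m n"
    and B: "B \<in> carrier_mat n n" "transpose_mat B * B = 1\<^sub>m n"
  shows "transpose_mat (A * B) * (A * B) = (1\<^sub>m n :: real mat)"
  using gram_mat_mult[OF A(1) B(1)] A B by simp

lemma orthogonal_block_diag_mat:
  assumes W: "W \<in> carrier_mat k k" "transpose_mat W * W = 1\<^sub>m k"
  defines "B \<equiv> four_block_mat (1\<^sub>m 1) (0\<^sub>m 1 k) (0\<^sub>m k 1) W"
  shows "B \<in> carrier_mat (Suc k) (Suc k)"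
    and "transpose_mat B = four_block_mat (1\<^sub>m 1) (0\<^sub>m 1 k) (0\<^sub>m k 1) (transpose_mat W)"
    and "transpose_mat B * B = (1\<^sub>m (Suc k) :: real mat)"
proof -
  show B: "B \<in> carrier_mat (Suc k) (Suc k)"
    unfolding B_def using W by auto
  show BT: "transpose_mat B = four_block_mat (1\<^sub>m 1) (0\<^sub>m 1 k) (0\<^sub>m k 1) (transpose_mat W)"
    unfolding B_def using W by (subst transpose_four_block_mat) auto
  show "transpose_mat B * B = 1\<^sub>m (Suc k)"
    unfolding BT unfolding B_def using W four_block_one_mat[of 1 k]
    by (subst mult_block_diag_mat) auto
qed

lemma orthogonal_conj_eigenvector_col:
  fixes M :: "real mat"
  assumes M: "M \<in> carrier_mat n n"
    and W: "W \<in> carrier_mat n n" "transpose_mat W * W = 1\<^sub>m n" and j: "j < n"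
    and eig: "M *\<^sub>v col W j = e \<cdot>\<^sub>v col W j" and i: "i < n"
  shows "(transpose_mat W * M * W) $$ (i,j) = (if i = j then e else 0)"
proof -
  have "(transpose_mat W * M * W) $$ (i,j) = col W i \<bullet> (M *\<^sub>v col W j)"
    using W M i j by (simp add: assoc_mult_mat[of _ n n _ n _ n] mult_mat_vec_def)
  also have "\<dots> = e * (transpose_mat W * W) $$ (i,j)"
    unfolding eig using W(1) i j by simp
  finally show ?thesis
    unfolding W(2) using i j by simp
qed

lemma symmetric_mat_deflate:
  fixes M :: "real mat"
  assumes M: "M \<in> carrier_mat (Suc k) (Suc k)" and sym: "transpose_mat M = M"
    and W: "W \<in> carrier_mat (Suc k) (Suc k)" "transpose_mat W * W = 1\<^sub>m (Suc k)"
    and eig: "M *\<^sub>v col W 0 = e \<cdot>\<^sub>v col W 0"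
  obtains M' where "M' \<in> carrier_mat k k" "transpose_mat M' = M'"
    "M = W * four_block_mat (mat 1 1 (\<lambda>_. e)) (0\<^sub>m 1 k) (0\<^sub>m k 1) M' * transpose_mat W"
proof -
  define M1 where "M1 = transpose_mat W * M * W"
  have M1: "M1 \<in> carrier_mat (Suc k) (Suc k)"
    unfolding M1_def using W M by auto
  have M1T: "transpose_mat M1 = M1"
    unfolding M1_def using W M sym
    by (simp add: transpose_mult[of _ "Suc k" "Suc k" _ "Suc k"] assoc_mult_mat[of _ "Suc k" "Suc k" _ "Suc k" _ "Suc k"])
  have M1_sym: "M1 $$ (j,i) = M1 $$ (i,j)" if "i < Suc k" "j < Suc k" for i j
    using arg_cong[OF M1T, of "\<lambda>A. A $$ (i,j)"] that M1 by auto
  have M1_col: "M1 $$ (i,0) = (if i = 0 then e else 0)" if "i < Suc k" for i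
    unfolding M1_def using orthogonal_conj_eigenvector_col[OF M W _ eig that] by simp
  define M' where "M' = mat k k (\<lambda>(i,j). M1 $$ (Suc i, Suc j))"
  have "M1 = four_block_mat (mat 1 1 (\<lambda>_. e)) (0\<^sub>m 1 k) (0\<^sub>m k 1) M'"
  proof (rule eq_matI)
    fix i j assume "i < dim_row (four_block_mat (mat 1 1 (\<lambda>_. e)) (0\<^sub>m 1 k) (0\<^sub>m k 1) M')"
      "j < dim_col (four_block_mat (mat 1 1 (\<lambda>_. e)) (0\<^sub>m 1 k) (0\<^sub>m k 1) M')"
    then have "i < Suc k" "j < Suc k"
      unfolding M'_def by auto
    then show "M1 $$ (i,j) = four_block_mat (mat 1 1 (\<lambda>_. e)) (0\<^sub>m 1 k) (0\<^sub>m k 1) M' $$ (i,j)"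
      using M1_col M1_sym[of 0 j] unfolding M'_def by (cases i; cases j) auto
  qed (use M1 M'_def in auto)
  moreover have "M = W * M1 * transpose_mat W"
  proof -
    have "W * M1 * transpose_mat W = (W * transpose_mat W) * M * (W * transpose_mat W)"
      unfolding M1_def using W M by (simp add: assoc_mult_mat[of _ "Suc k" "Suc k" _ "Suc k" _ "Suc k"])
    then show ?thesis
      using M orthogonal_mat_mult_transpose[OF W] by simp
  qed
  moreover have "M' \<in> carrier_mat k k" "transpose_mat M' = M'"
    unfolding M'_def using M1_sym by auto
  ultimately show ?thesis
    using that by blast
qed

lemma symmetric_mat_top_eigenvector:
  fixes M :: "real mat"
  assumes M: "M \<in> carrier_mat n n" and sym: "transpose_mat M = M" and n: "0 < n"
  obtains e u where "poly (char_poly M) e = 0" "\<And>x. poly (char_poly M) x = 0 \<Longrightarrow> x \<le> e"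
    "u \<in> carrier_vec n" "u \<bullet> u = 1" "M *\<^sub>v u = e \<cdot>\<^sub>v u"
proof -
  define e where "e = Max {x. poly (char_poly M) x = 0}"
  have fin: "finite {x. poly (char_poly M) x = 0}"
    using degree_monic_char_poly[OF M] by (intro poly_roots_finite) auto
  have e: "poly (char_poly M) e = 0" and e_max: "\<And>x. poly (char_poly M) x = 0 \<Longrightarrow> x \<le> e"
    using symmetric_mat_has_real_eigenvalue[OF M sym n] Max_in[OF fin] Max_ge[OF fin]
    unfolding e_def by auto
  obtain v where v: "v \<in> carrier_vec n" "v \<noteq> 0\<^sub>v n" "M *\<^sub>v v = e \<cdot>\<^sub>v v"
    using eigenvalue_root_char_poly[OF M] e M unfolding eigenvalue_def eigenvector_def by auto
  define u where "u = (1 / vnorm v) \<cdot>\<^sub>v v"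
  have vn: "0 < vnorm v"
    using sprod_self_pos[OF v(1,2)] unfolding vnorm_def by simp
  have "M *\<^sub>v u = (1 / vnorm v) \<cdot>\<^sub>v (M *\<^sub>v v)"
    unfolding u_def using M v by (simp add: mult_mat_vec)
  also have "\<dots> = e \<cdot>\<^sub>v u"
    unfolding v(3) u_def by (intro eq_vecI) auto
  finally have "M *\<^sub>v u = e \<cdot>\<^sub>v u" .
  moreover have "u \<in> carrier_vec n" "u \<bullet> u = 1"
    unfolding u_def using v vn vnorm_sq[of "(1 / vnorm v) \<cdot>\<^sub>v v"] by (auto simp: vnorm_smult)
  ultimately show ?thesis
    using that e e_max by blast
qed

lemma orthogonal_conj_block_diag:
  assumes W0: "W0 \<in> carrier_mat (Suc k) (Suc k)" "transpose_mat W0 * W0 = 1\<^sub>m (Suc k)"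
    and W2: "W2 \<in> carrier_mat k k" "transpose_mat W2 * W2 = 1\<^sub>m k"
  defines "W \<equiv> W0 * four_block_mat (1\<^sub>m 1) (0\<^sub>m 1 k) (0\<^sub>m k 1) W2"
  shows "W \<in> carrier_mat (Suc k) (Suc k)" and "transpose_mat W * W = 1\<^sub>m (Suc k)"
    and "W0 * four_block_mat (mat 1 1 (\<lambda>_. e)) (0\<^sub>m 1 k) (0\<^sub>m k 1) (W2 * mat_of_diag k d * transpose_mat W2)
      * transpose_mat W0 = W * mat_of_diag (Suc k) (\<lambda>i. if i = 0 then e else d (i - 1)) * transpose_mat W"
proof -
  define Bk where "Bk = four_block_mat (1\<^sub>m 1) (0\<^sub>m 1 k) (0\<^sub>m k 1) W2"
  note Bk = orthogonal_block_diag_mat[OF W2, folded Bk_def]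
  show "W \<in> carrier_mat (Suc k) (Suc k)"
    unfolding W_def Bk_def[symmetric] using W0(1) Bk(1) by simp
  show "transpose_mat W * W = 1\<^sub>m (Suc k)"
    unfolding W_def Bk_def[symmetric] using orthogonal_mat_mult[OF W0 Bk(1,3)] .
  have "mat_of_diag (Suc k) (\<lambda>i. if i = 0 then e else d (i - 1))
      = four_block_mat (mat 1 1 (\<lambda>_. e)) (0\<^sub>m 1 k) (0\<^sub>m k 1) (mat_of_diag k d)"
    by (rule eq_matI) (auto simp: mat_of_diag_def)
  then have "four_block_mat (mat 1 1 (\<lambda>_. e)) (0\<^sub>m 1 k) (0\<^sub>m k 1) (W2 * mat_of_diag k d * transpose_mat W2)
      = Bk * mat_of_diag (Suc k) (\<lambda>i. if i = 0 then e else d (i - 1)) * transpose_mat Bk"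
    unfolding Bk_def Bk(2)[unfolded Bk_def] using W2(1) by (simp add: block_diag_mat_conj)
  then show "W0 * four_block_mat (mat 1 1 (\<lambda>_. e)) (0\<^sub>m 1 k) (0\<^sub>m k 1) (W2 * mat_of_diag k d * transpose_mat W2)
      * transpose_mat W0 = W * mat_of_diag (Suc k) (\<lambda>i. if i = 0 then e else d (i - 1)) * transpose_mat W"
    unfolding W_def Bk_def[symmetric] using mult_conj_mat_assoc[OF W0(1) Bk(1)] by simp
qed

theorem real_symmetric_spectral:
  fixes M :: "real mat"
  assumes "M \<in> carrier_mat n n" "transpose_mat M = M"
  shows "\<exists>W d. W \<in> carrier_mat n n \<and> transpose_mat W * W = 1\<^sub>m n \<and>
     M = W * mat_of_diag n d * transpose_mat W \<and> (\<forall>i j. i \<le> j \<longrightarrow> j < n \<longrightarrow> d j \<le> d i) \<and>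
     (\<forall>i<n. poly (char_poly M) (d i) = 0)"
  using assms
proof (induction n arbitrary: M)
  case 0
  show ?case
    by (rule exI[of _ "1\<^sub>m 0"], rule exI[of _ "\<lambda>_. 0"]) (use 0 in auto)
next
  case (Suc k)
  note M = Suc.prems(1) and sym = Suc.prems(2)
  \<comment> \<open>splitting off the largest eigenvalue first keeps the eigenvalues sorted\<close>
  obtain e u where e: "poly (char_poly M) e = 0" and e_max: "\<And>x. poly (char_poly M) x = 0 \<Longrightarrow> x \<le> e"
    and u: "u \<in> carrier_vec (Suc k)" "u \<bullet> u = 1" "M *\<^sub>v u = e \<cdot>\<^sub>v u"
    using symmetric_mat_top_eigenvector[OF M sym] by blast
  obtain W0 where W0: "W0 \<in> carrier_mat (Suc k) (Suc k)" "transpose_mat W0 * W0 = 1\<^sub>m (Suc k)" "col W0 0 = u"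
    using orthogonal_mat_with_first_col[OF u(1,2)] .
  obtain M' where M': "M' \<in> carrier_mat k k" "transpose_mat M' = M'"
    and M_W0: "M = W0 * four_block_mat (mat 1 1 (\<lambda>_. e)) (0\<^sub>m 1 k) (0\<^sub>m k 1) M' * transpose_mat W0"
    using symmetric_mat_deflate[OF M sym W0(1,2)] u(3) W0(3) by blast
  obtain W2 d2 where W2: "W2 \<in> carrier_mat k k" "transpose_mat W2 * W2 = 1\<^sub>m k"
    "M' = W2 * mat_of_diag k d2 * transpose_mat W2" "\<forall>i j. i \<le> j \<longrightarrow> j < k \<longrightarrow> d2 j \<le> d2 i"
    "\<forall>i<k. poly (char_poly M') (d2 i) = 0"
    using Suc.IH[OF M'] by blast
  define d where "d = (\<lambda>i. if i = 0 then e else d2 (i - 1))"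
  have root: "poly (char_poly M) x = 0" if "poly (char_poly M') x = 0" for x
  proof -
    have "four_block_mat (mat 1 1 (\<lambda>_. e)) (0\<^sub>m 1 k) (0\<^sub>m k 1) M' \<in> carrier_mat (Suc k) (Suc k)"
      using M'(1) by auto
    then have "char_poly M = char_poly (four_block_mat (mat 1 1 (\<lambda>_. e)) (0\<^sub>m 1 k) (0\<^sub>m k 1) M')"
      by (rule char_poly_orthogonal_conj[OF W0(1,2) _ M_W0])
    also have "\<dots> = char_poly (mat 1 1 (\<lambda>_. e)) * char_poly M'"
      by (rule char_poly_four_block_zeros_col) (use M'(1) in auto)
    finally show ?thesis
      using that by simp
  qed
  have "d j \<le> d i" if "i \<le> j" "j < Suc k" for i j
    using that W2(4,5) e_max root unfolding d_def by (cases "i = 0") auto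
  moreover have "poly (char_poly M) (d i) = 0" if "i < Suc k" for i
    using that e root W2(5) unfolding d_def by auto
  ultimately show ?case
    using orthogonal_conj_block_diag(1,2)[OF W0(1,2) W2(1,2)]
      orthogonal_conj_block_diag(3)[OF W0(1,2) W2(1,2), of e d2] M_W0 W2(3)
    unfolding d_def by blast
qed

section \<open>Singular values and the min-max principle\<close>

lemma proots_prod_linear: "proots (\<Prod>a\<leftarrow>xs. [:- a, 1:]) = mset (xs :: real list)"
proof -
  have "0 \<notin> (\<lambda>a. [:- a, 1:]) ` set xs"
    by auto
  then have "proots (\<Prod>a\<leftarrow>xs. [:- a, 1:]) = sum_list (map proots (map (\<lambda>a. [:- a, 1:]) xs))"
    using proots_prod_list[of "map (\<lambda>a. [:- a, 1:]) xs"] by simp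
  also have "\<dots> = mset xs"
    by (induction xs) auto
  finally show ?thesis .
qed

lemma sing_vals_eq_sqrt_eigenvalues:
  assumes M: "M \<in> carrier_mat m n" and W: "W \<in> carrier_mat n n" "transpose_mat W * W = 1\<^sub>m n"
    and dec: "transpose_mat M * M = W * mat_of_diag n d * transpose_mat W"
    and sorted: "\<forall>i j. i \<le> j \<longrightarrow> j < n \<longrightarrow> d j \<le> d i"
  shows "sing_vals M = map (\<lambda>j. sqrt (d j)) [0..<n]"
proof -
  define xs where "xs = map d [0..<n]"
  have "char_poly (transpose_mat M * M) = char_poly (mat_of_diag n d)"
    by (rule char_poly_orthogonal_conj[OF W _ dec]) simp
  also have "\<dots> = (\<Prod>a\<leftarrow>xs. [:- a, 1:])"
  proof -
    have "diag_mat (mat_of_diag n d) = xs"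
      unfolding diag_mat_def mat_of_diag_def xs_def by auto
    moreover have "upper_triangular (mat_of_diag n d)"
      unfolding upper_triangular_def mat_of_diag_def by auto
    ultimately show ?thesis
      using char_poly_upper_triangular[of "mat_of_diag n d" n] by simp
  qed
  finally have cp: "char_poly (transpose_mat M * M) = (\<Prod>a\<leftarrow>xs. [:- a, 1:])" .
  have "sorted (rev xs)"
    unfolding sorted_iff_nth_mono xs_def using sorted by (auto simp: rev_nth)
  then have "sort xs = rev xs"
    by (intro properties_for_sort) auto
  then show ?thesis
    unfolding sing_vals_def cp proots_prod_linear sorted_list_of_multiset_mset by (simp add: xs_def)
qed

lemma gram_mat_eigendecomposition:
  fixes M :: "real mat"
  assumes M: "M \<in> carrier_mat m n"
  obtains W d where "W \<in> carrier_mat n n" "transpose_mat W * W = 1\<^sub>m n"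
    "transpose_mat M * M = W * mat_of_diag n d * transpose_mat W"
    "\<forall>i j. i \<le> j \<longrightarrow> j < n \<longrightarrow> d j \<le> d i"
    "sing_vals M = map (\<lambda>j. sqrt (d j)) [0..<n]"
proof -
  have "transpose_mat M * M \<in> carrier_mat n n" "transpose_mat (transpose_mat M * M) = transpose_mat M * M"
    using M by (auto simp: transpose_mult[of _ n m _ n])
  then obtain W d where W: "W \<in> carrier_mat n n" "transpose_mat W * W = 1\<^sub>m n"
    and dec: "transpose_mat M * M = W * mat_of_diag n d * transpose_mat W"
    and sorted: "\<forall>i j. i \<le> j \<longrightarrow> j < n \<longrightarrow> d j \<le> d i"
    by (metis real_symmetric_spectral)
  show ?thesis
    by (rule that[OF W dec sorted sing_vals_eq_sqrt_eigenvalues[OF M W dec sorted]])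
qed

lemma length_sing_vals:
  assumes "M \<in> carrier_mat m n"
  shows "length (sing_vals M) = n"
proof -
  obtain W d where "W \<in> carrier_mat n n" "transpose_mat W * W = 1\<^sub>m n"
    "transpose_mat M * M = W * mat_of_diag n d * transpose_mat W"
    "\<forall>i j. i \<le> j \<longrightarrow> j < n \<longrightarrow> d j \<le> d i" "sing_vals M = map (\<lambda>j. sqrt (d j)) [0..<n]"
    by (rule gram_mat_eigendecomposition[OF assms])
  then show ?thesis
    by simp
qed

lemma orthogonal_mat_sprod_expansion:
  assumes W: "W \<in> carrier_mat n n" "transpose_mat W * W = 1\<^sub>m n" and x: "x \<in> carrier_vec n"
  shows "x \<bullet> x = (\<Sum>r<n. (col W r \<bullet> (x :: real vec))\<^sup>2)"
proof -
  have "x \<bullet> x = (W *\<^sub>v (transpose_mat W *\<^sub>v x)) \<bullet> (W *\<^sub>v (transpose_mat W *\<^sub>v x))"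
    unfolding orthogonal_mat_cancel[OF W x] ..
  also have "\<dots> = (transpose_mat W *\<^sub>v x) \<bullet> (transpose_mat W *\<^sub>v x)"
    using W x by (intro orthonormal_cols_sprod) auto
  also have "\<dots> = (\<Sum>r<n. (col W r \<bullet> x)\<^sup>2)"
    using W x by (subst sprod_self_eq_sum[of _ n]) auto
  finally show ?thesis .
qed

lemma mat_of_diag_mult_vec:
  assumes "y \<in> carrier_vec n"
  shows "mat_of_diag n d *\<^sub>v y = vec n (\<lambda>r. d r * y $ r)"
proof (rule eq_vecI)
  fix r assume "r < dim_vec (vec n (\<lambda>r. d r * y $ r))"
  then show "(mat_of_diag n d *\<^sub>v y) $ r = vec n (\<lambda>r. d r * y $ r) $ r"
    using assms unfolding mat_of_diag_def
    by (simp add: scalar_prod_def if_distrib[of "\<lambda>x. x * _"] sum.If_cases lessThan_atLeast0 cong: if_cong)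
qed simp

lemma sprod_mult_mat_vec_eigen_expansion:
  assumes M: "M \<in> carrier_mat m n" and W: "W \<in> carrier_mat n n" "transpose_mat W * W = 1\<^sub>m n"
    and dec: "transpose_mat M * M = W * mat_of_diag n d * transpose_mat W" and x: "x \<in> carrier_vec n"
  shows "(M *\<^sub>v x) \<bullet> (M *\<^sub>v x) = (\<Sum>r<n. d r * (col W r \<bullet> (x :: real vec))\<^sup>2)"
proof -
  define y where "y = transpose_mat W *\<^sub>v x"
  have y: "y \<in> carrier_vec n"
    unfolding y_def using W x by auto
  have Dy: "mat_of_diag n d *\<^sub>v y \<in> carrier_vec n"
    using mult_mat_vec_carrier[OF mat_of_diag_carrier y] .
  have "(M *\<^sub>v x) \<bullet> (M *\<^sub>v x) = x \<bullet> (W *\<^sub>v (mat_of_diag n d *\<^sub>v y))"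
    unfolding sprod_mult_mat_vec_self[OF M x] dec y_def using W x
    by (simp add: assoc_mult_mat_vec[of _ n n _ n])
  also have "\<dots> = y \<bullet> (mat_of_diag n d *\<^sub>v y)"
    unfolding y_def by (rule sprod_mult_mat_vec[OF W(1) Dy[unfolded y_def] x])
  also have "\<dots> = (\<Sum>r<n. d r * (y $ r)\<^sup>2)"
    unfolding mat_of_diag_mult_vec[OF y] using y
    by (auto simp: scalar_prod_def lessThan_atLeast0 power2_eq_square mult.left_commute)
  also have "\<dots> = (\<Sum>r<n. d r * (col W r \<bullet> x)\<^sup>2)"
    unfolding y_def using W x by (intro sum.cong) auto
  finally show ?thesis .
qed

lemma weighted_sum_le_tail_weight:
  fixes d y :: "nat \<Rightarrow> real"
  assumes sorted: "\<forall>i j. i \<le> j \<longrightarrow> j < n \<longrightarrow> d j \<le> d i"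
    and y: "\<And>r. r < j \<Longrightarrow> y r = 0"
  shows "(\<Sum>r<n. d r * (y r)\<^sup>2) \<le> d j * (\<Sum>r<n. (y r)\<^sup>2)"
  unfolding sum_distrib_left
proof (rule sum_mono)
  fix r assume r: "r \<in> {..<n}"
  show "d r * (y r)\<^sup>2 \<le> d j * (y r)\<^sup>2"
  proof (cases "r < j")
    case False
    then show ?thesis
      using sorted[rule_format, of j r] r by (intro mult_right_mono) auto
  qed (use y in simp)
qed

lemma weighted_sum_ge_head_weight:
  fixes d y :: "nat \<Rightarrow> real"
  assumes sorted: "\<forall>i j. i \<le> j \<longrightarrow> j < n \<longrightarrow> d j \<le> d i"
    and j: "j < n" and y: "\<And>r. j < r \<Longrightarrow> r < n \<Longrightarrow> y r = 0"
  shows "d j * (\<Sum>r<n. (y r)\<^sup>2) \<le> (\<Sum>r<n. d r * (y r)\<^sup>2)"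
  unfolding sum_distrib_left
proof (rule sum_mono)
  fix r assume r: "r \<in> {..<n}"
  show "d j * (y r)\<^sup>2 \<le> d r * (y r)\<^sup>2"
  proof (cases "j < r")
    case False
    then show ?thesis
      using sorted[rule_format, of r j] j by (intro mult_right_mono) auto
  qed (use y r in simp)
qed

lemma exists_nonzero_orthogonal:
  fixes F :: "real vec set"
  assumes F: "F \<subseteq> carrier_vec N" "finite F" "card F < N"
  obtains u where "u \<in> carrier_vec N" "u \<noteq> 0\<^sub>v N" "\<And>f. f \<in> F \<Longrightarrow> f \<bullet> u = 0"
proof -
  obtain fs where fs: "set fs = F" "distinct fs"
    using finite_distinct_list[OF F(2)] by blast
  define p where "p = length fs"
  have p: "p < N"
    using F(3) distinct_card[OF fs(2)] fs(1) unfolding p_def by simp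
  define c where "c = (\<lambda>i. if i < p then fs ! i else 0\<^sub>v N)"
  define M where "M = mat\<^sub>r N N (\<lambda>i. if i = p then 0\<^sub>v N else c i)"
  have M: "M \<in> carrier_mat N N"
    unfolding M_def by auto
  \<comment> \<open>the rows of \<open>M\<close> are the vectors of \<open>F\<close> padded by zero rows, so \<open>M\<close> is singular\<close>
  have "fs ! i \<in> carrier_vec N" if "i < p" for i
    using F(1) fs(1) that nth_mem unfolding p_def by blast
  then have "det M = 0"
    unfolding M_def by (intro det_row_0[OF p]) (auto simp: c_def)
  then obtain u where u: "u \<in> carrier_vec N" "u \<noteq> 0\<^sub>v N" "M *\<^sub>v u = 0\<^sub>v N"
    using det_0_iff_vec_prod_zero[OF M] by auto
  have "f \<bullet> u = 0" if "f \<in> F" for f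
  proof -
    have "\<exists>i<p. fs ! i = f"
      using that fs(1) unfolding p_def by (simp add: in_set_conv_nth[symmetric])
    then obtain i where i: "i < p" "f = fs ! i"
      by auto
    have "row M i = f"
      unfolding M_def c_def using i p F(1) fs(1) that by auto
    then show ?thesis
      using arg_cong[OF u(3), of "\<lambda>v. v $ i"] M i p by simp
  qed
  then show ?thesis
    using that u by blast
qed

lemma append_sprod_split:
  assumes "f \<in> carrier_vec n" "g \<in> carrier_vec b" "u \<in> carrier_vec (n + b)"
  shows "(f @\<^sub>v g) \<bullet> u = f \<bullet> vec_first u n + g \<bullet> vec_last u (b :: nat)"
  using scalar_prod_append[OF assms(1,2) vec_first_carrier vec_last_carrier] vec_first_last_append[OF assms(3)]
  by metis

lemma exists_nonzero_orthogonal_pair: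
  fixes F :: "(real vec \<times> real vec) set"
  assumes F: "F \<subseteq> carrier_vec n \<times> carrier_vec b" "finite F" "card F < n + b"
  obtains x z where "x \<in> carrier_vec n" "z \<in> carrier_vec b" "x \<noteq> 0\<^sub>v n \<or> z \<noteq> 0\<^sub>v b"
    "\<And>f g. (f, g) \<in> F \<Longrightarrow> f \<bullet> x = g \<bullet> z"
proof -
  define G where "G = (\<lambda>(f, g). f @\<^sub>v - g) ` F"
  have "G \<subseteq> carrier_vec (n + b)" "finite G"
    unfolding G_def using F by auto
  moreover have "card G < n + b"
    unfolding G_def using F card_image_le[OF F(2)] by (meson le_less_trans)
  ultimately obtain u where u: "u \<in> carrier_vec (n + b)" "u \<noteq> 0\<^sub>v (n + b)" and orth: "\<And>g. g \<in> G \<Longrightarrow> g \<bullet> u = 0"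
    using exists_nonzero_orthogonal by metis
  have "vec_first u n \<noteq> 0\<^sub>v n \<or> vec_last u b \<noteq> 0\<^sub>v b"
  proof (rule ccontr)
    assume "\<not> ?thesis"
    then have "u = 0\<^sub>v n @\<^sub>v 0\<^sub>v b"
      using vec_first_last_append[OF u(1)] by simp
    also have "\<dots> = 0\<^sub>v (n + b)"
      by (intro eq_vecI) auto
    finally show False
      using u(2) by simp
  qed
  moreover have "f \<bullet> vec_first u n = g \<bullet> vec_last u b" if "(f, g) \<in> F" for f g
    using orth[of "f @\<^sub>v - g"] append_sprod_split[of f n "- g" b u] that F u unfolding G_def by force
  ultimately show ?thesis
    by (intro that[of "vec_first u n" "vec_last u b"]) auto
qed

text \<open>The Courant-Fischer principle, with subspaces of given (co)dimension described by finite sets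
  of normal vectors. Note that \<open>sing_vals M ! j\<close> is \<open>\<sigma>\<^sub>j\<^sub>+\<^sub>1(M)\<close>.\<close>
lemma sing_val_ge_of_witnesses:
  fixes M :: "real mat"
  assumes M: "M \<in> carrier_mat m n" and j: "j < n" and c: "0 \<le> c"
    and wit: "\<And>F. F \<subseteq> carrier_vec n \<Longrightarrow> finite F \<Longrightarrow> card F \<le> j \<Longrightarrow>
      \<exists>x \<in> carrier_vec n. x \<noteq> 0\<^sub>v n \<and> (\<forall>f \<in> F. f \<bullet> x = 0) \<and> c * vnorm x \<le> vnorm (M *\<^sub>v x)"
  shows "c \<le> sing_vals M ! j"
proof -
  obtain W d where W: "W \<in> carrier_mat n n" "transpose_mat W * W = 1\<^sub>m n"
    and dec: "transpose_mat M * M = W * mat_of_diag n d * transpose_mat W"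
    and sorted: "\<forall>i j. i \<le> j \<longrightarrow> j < n \<longrightarrow> d j \<le> d i"
    and sv: "sing_vals M = map (\<lambda>j. sqrt (d j)) [0..<n]"
    by (rule gram_mat_eigendecomposition[OF M])
  have "col W ` {..<j} \<subseteq> carrier_vec n" "card (col W ` {..<j}) \<le> j"
    using W(1) card_image_le[of "{..<j}" "col W"] by auto
  then obtain x where x: "x \<in> carrier_vec n" "x \<noteq> 0\<^sub>v n"
    and orth: "\<And>r. r < j \<Longrightarrow> col W r \<bullet> x = 0" and wx: "c * vnorm x \<le> vnorm (M *\<^sub>v x)"
    using wit[of "col W ` {..<j}"] by auto
  have "c\<^sup>2 * (x \<bullet> x) \<le> (M *\<^sub>v x) \<bullet> (M *\<^sub>v x)"
    using wx c by (simp add: mult_vnorm_le_vnorm_iff)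
  also have "\<dots> = (\<Sum>r<n. d r * (col W r \<bullet> x)\<^sup>2)"
    by (rule sprod_mult_mat_vec_eigen_expansion[OF M W dec x(1)])
  also have "\<dots> \<le> d j * (x \<bullet> x)"
    unfolding orthogonal_mat_sprod_expansion[OF W x(1)]
    by (rule weighted_sum_le_tail_weight[OF sorted]) (use orth in simp)
  finally have "c\<^sup>2 \<le> d j"
    using sprod_self_pos[OF x] by simp
  then show ?thesis
    unfolding sv using j by (simp add: real_le_rsqrt)
qed

lemma sing_val_le_of_witnesses:
  fixes M :: "real mat"
  assumes M: "M \<in> carrier_mat m n" and j: "j < n"
    and wit: "\<And>F. F \<subseteq> carrier_vec n \<Longrightarrow> finite F \<Longrightarrow> j + card F < n \<Longrightarrow>
      \<exists>x \<in> carrier_vec n. x \<noteq> 0\<^sub>v n \<and> (\<forall>f \<in> F. f \<bullet> x = 0) \<and> vnorm (M *\<^sub>v x) \<le> c * vnorm x"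
  shows "sing_vals M ! j \<le> c"
proof -
  obtain W d where W: "W \<in> carrier_mat n n" "transpose_mat W * W = 1\<^sub>m n"
    and dec: "transpose_mat M * M = W * mat_of_diag n d * transpose_mat W"
    and sorted: "\<forall>i j. i \<le> j \<longrightarrow> j < n \<longrightarrow> d j \<le> d i"
    and sv: "sing_vals M = map (\<lambda>j. sqrt (d j)) [0..<n]"
    by (rule gram_mat_eigendecomposition[OF M])
  have "col W ` {j<..<n} \<subseteq> carrier_vec n" "j + card (col W ` {j<..<n}) < n"
    using W(1) j card_image_le[of "{j<..<n}" "col W"] by auto
  then obtain x where x: "x \<in> carrier_vec n" "x \<noteq> 0\<^sub>v n"
    and orth: "\<And>r. j < r \<Longrightarrow> r < n \<Longrightarrow> col W r \<bullet> x = 0" and wx: "vnorm (M *\<^sub>v x) \<le> c * vnorm x"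
    using wit[of "col W ` {j<..<n}"] by auto
  have xpos: "0 < x \<bullet> x"
    by (rule sprod_self_pos[OF x])
  then have "0 < vnorm x"
    unfolding vnorm_def by simp
  moreover have "0 \<le> c * vnorm x"
    using wx vnorm_nonneg[of "M *\<^sub>v x"] by linarith
  ultimately have c: "0 \<le> c"
    by (simp add: zero_le_mult_iff)
  have "d j * (x \<bullet> x) \<le> (\<Sum>r<n. d r * (col W r \<bullet> x)\<^sup>2)"
    unfolding orthogonal_mat_sprod_expansion[OF W x(1)]
    by (rule weighted_sum_ge_head_weight[OF sorted j]) (use orth in simp)
  also have "\<dots> = (M *\<^sub>v x) \<bullet> (M *\<^sub>v x)"
    by (rule sprod_mult_mat_vec_eigen_expansion[OF M W dec x(1), symmetric])
  also have "\<dots> \<le> c\<^sup>2 * (x \<bullet> x)"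
    using wx c by (simp add: vnorm_le_mult_vnorm_iff)
  finally have "d j \<le> c\<^sup>2"
    using xpos by simp
  then show ?thesis
    unfolding sv using j c by (simp add: real_le_lsqrt)
qed

lemma sing_vals_antimono:
  assumes M: "M \<in> carrier_mat m n" and ij: "i \<le> j" "j < n"
  shows "sing_vals M ! j \<le> sing_vals M ! i"
proof -
  obtain W d where "W \<in> carrier_mat n n" "transpose_mat W * W = 1\<^sub>m n"
    "transpose_mat M * M = W * mat_of_diag n d * transpose_mat W"
    and sorted: "\<forall>i j. i \<le> j \<longrightarrow> j < n \<longrightarrow> d j \<le> d i"
    and sv: "sing_vals M = map (\<lambda>j. sqrt (d j)) [0..<n]"
    by (rule gram_mat_eigendecomposition[OF M])
  show ?thesis
    unfolding sv using sorted ij by simp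
qed

lemma rank_theta_eqI:
  assumes len: "length (sing_vals M) = n" and r: "r \<le> n"
    and above: "\<And>j. j < r \<Longrightarrow> \<theta> < sing_vals M ! j"
    and below: "\<And>j. r \<le> j \<Longrightarrow> j < n \<Longrightarrow> sing_vals M ! j \<le> \<theta>"
  shows "rank_theta \<theta> M = r"
proof -
  have "filter (\<lambda>s. \<theta> < s) (take r (sing_vals M)) = take r (sing_vals M)"
    using above len r by (auto simp: filter_id_conv in_set_conv_nth)
  moreover have "filter (\<lambda>s. \<theta> < s) (drop r (sing_vals M)) = []"
    using below len by (auto simp: filter_empty_conv in_set_conv_nth not_less)
  ultimately have "filter (\<lambda>s. \<theta> < s) (sing_vals M) = take r (sing_vals M)"
    by (metis append_Nil2 append_take_drop_id filter_append)
  then show ?thesis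
    unfolding rank_theta_def using len r by simp
qed

section \<open>Ranges and distances between them\<close>

lemma first_cols_orthonormal:
  assumes U: "U \<in> carrier_mat m m" "transpose_mat U * U = 1\<^sub>m m" and k: "k \<le> m"
  shows "first_cols k U \<in> carrier_mat m k"
    and "\<And>r. r < k \<Longrightarrow> col (first_cols k U) r = col U r"
    and "transpose_mat (first_cols k U) * first_cols k U = (1\<^sub>m k :: real mat)"
proof -
  show c: "first_cols k U \<in> carrier_mat m k"
    unfolding first_cols_def using U by auto
  show colc: "col (first_cols k U) r = col U r" if "r < k" for r
    using that k U unfolding first_cols_def by (intro eq_vecI) auto
  show "transpose_mat (first_cols k U) * first_cols k U = 1\<^sub>m k"
  proof (rule eq_matI)
    fix i j assume "i < dim_row (1\<^sub>m k :: real mat)" "j < dim_col (1\<^sub>m k :: real mat)"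
    then have ij: "i < k" "j < k"
      by auto
    then have "(transpose_mat (first_cols k U) * first_cols k U) $$ (i,j) = (transpose_mat U * U) $$ (i,j)"
      using c colc U(1) k by simp
    then show "(transpose_mat (first_cols k U) * first_cols k U) $$ (i,j) = 1\<^sub>m k $$ (i,j)"
      using U(2) ij k by simp
  qed (use c in auto)
qed

lemma transpose_first_cols_mult_vec:
  assumes U: "U \<in> carrier_mat m m" "transpose_mat U * U = 1\<^sub>m m" and k: "k \<le> m"
    and w: "w \<in> carrier_vec m"
  shows "transpose_mat (first_cols k U) *\<^sub>v w = vec k (\<lambda>r. col U r \<bullet> (w :: real vec))"
  using first_cols_orthonormal(1,2)[OF U k] w by (intro eq_vecI) auto

lemma subspace_dist_bound:
  assumes Q: "Q \<in> carrier_mat m b" "transpose_mat Q * Q = 1\<^sub>m b"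
    and Z: "Z \<in> carrier_mat m k" and z: "z \<in> carrier_vec b"
  shows "vnorm ((1\<^sub>m m - Z * transpose_mat Z) *\<^sub>v (Q *\<^sub>v z)) \<le> subspace_dist Q Z * vnorm (Q *\<^sub>v z)"
proof -
  have "(1\<^sub>m m - Z * transpose_mat Z) *\<^sub>v (Q *\<^sub>v z)
      = ((1\<^sub>m m - Z * transpose_mat Z) * (Q * transpose_mat Q)) *\<^sub>v (Q *\<^sub>v z)"
    using Q Z z projection_mult_range[OF Q z] by (subst assoc_mult_mat_vec[of _ m m _ m]) auto
  also have "vnorm \<dots> \<le> subspace_dist Q Z * vnorm (Q *\<^sub>v z)"
    unfolding subspace_dist_def carrier_matD(1)[OF Q(1)]
    by (rule vnorm_mult_mat_vec_le_norm2[of _ m m]) (use Q Z z in auto)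
  finally show ?thesis .
qed

lemma scaled_le_of_sq_le_mult:
  fixes Y T N c :: real
  assumes Y0: "0 \<le> Y" and T0: "0 \<le> T" and N0: "0 \<le> N"
    and NY: "N - Y \<le> c * N" and YY: "Y * Y \<le> T * N"
  shows "(1 - c) * Y \<le> T"
proof (cases "N = 0")
  case True
  then show ?thesis
    using YY Y0 T0 by (simp add: mult_le_0_iff)
next
  case False
  have "Y * ((1 - c) * N) \<le> Y * Y"
    using NY Y0 by (intro mult_left_mono) (auto simp: algebra_simps)
  also have "\<dots> \<le> T * N"
    by (rule YY)
  finally have "((1 - c) * Y) * N \<le> T * N"
    by (simp add: algebra_simps)
  then show ?thesis
    using False N0 by (simp add: mult_le_cancel_right)
qed

lemma projection_range_close:
  assumes Q: "Q \<in> carrier_mat m b" "transpose_mat Q * Q = 1\<^sub>m b"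
    and Z: "Z \<in> carrier_mat m k" "transpose_mat Z * Z = 1\<^sub>m k"
    and z: "z \<in> carrier_vec b" and e: "0 \<le> \<epsilon>"
    and close: "vnorm ((1\<^sub>m m - Z * transpose_mat Z) *\<^sub>v (Q *\<^sub>v z)) \<le> \<epsilon> * vnorm (Q *\<^sub>v z)"
  defines "y \<equiv> (Z * transpose_mat Z) *\<^sub>v (Q *\<^sub>v z)"
  shows "vnorm ((1\<^sub>m m - Q * transpose_mat Q) *\<^sub>v y) \<le> \<epsilon> * vnorm y"
proof -
  define w t where "w = Q *\<^sub>v z" and "t = transpose_mat Z *\<^sub>v w"
  have w: "w \<in> carrier_vec m" and t: "t \<in> carrier_vec k"
    unfolding w_def t_def using Q Z z by auto
  have y: "y = Z *\<^sub>v t" "y \<in> carrier_vec m"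
    unfolding y_def t_def w_def using Q Z z by (auto simp: assoc_mult_mat_vec[of _ m k _ m])
  define Y T N where "Y = y \<bullet> y" and "T = (transpose_mat Q *\<^sub>v y) \<bullet> (transpose_mat Q *\<^sub>v y)"
    and "N = w \<bullet> w"
  have Y: "Y = t \<bullet> t"
    unfolding Y_def y(1) using orthonormal_cols_sprod[OF Z t] .
  have N_Y: "N - Y \<le> \<epsilon>\<^sup>2 * N"
    using close e projector_sprod[OF Z w] unfolding N_def Y t_def w_def
    by (simp add: vnorm_le_mult_vnorm_iff)
  \<comment> \<open>\<open>Y = \<langle>y, w\<rangle> = \<langle>Q\<^sup>T y, z\<rangle>\<close>, so Cauchy-Schwarz bounds \<open>Y\<^sup>2\<close> by \<open>T N\<close>\<close>
  have "Y = (transpose_mat Q *\<^sub>v y) \<bullet> z"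
    using sprod_mult_mat_vec[OF Z(1) t w] sprod_mult_mat_vec[OF Q(1) z y(2)] comm_scalar_prod[OF y(2) w]
    unfolding Y y(1) t_def w_def by simp
  then have YY: "Y * Y \<le> T * N"
    using scalar_prod_Cauchy_Schwarz[of "transpose_mat Q *\<^sub>v y" b z] Q y z orthonormal_cols_sprod[OF Q z]
    unfolding T_def N_def w_def by (simp add: power2_eq_square)
  have Y0: "0 \<le> Y" and T0: "0 \<le> T" and N0: "0 \<le> N"
    unfolding Y_def T_def N_def by (simp_all add: sprod_self_nonneg)
  have "(1 - \<epsilon>\<^sup>2) * Y \<le> T"
    by (rule scaled_le_of_sq_le_mult[OF Y0 T0 N0 N_Y YY])
  then show ?thesis
    using e projector_sprod[OF Q y(2)] unfolding Y_def T_def by (simp add: vnorm_le_mult_vnorm_iff algebra_simps)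
qed

lemma subspace_dist_less_1_orthogonal:
  assumes Q: "Q \<in> carrier_mat m b" "transpose_mat Q * Q = 1\<^sub>m b"
    and Z: "Z \<in> carrier_mat m k" and z: "z \<in> carrier_vec b"
    and dist: "subspace_dist Q Z < 1" and orth: "transpose_mat Z *\<^sub>v (Q *\<^sub>v z) = 0\<^sub>v k"
  shows "z = 0\<^sub>v b"
proof -
  have Qz: "Q *\<^sub>v z \<in> carrier_vec m"
    using Q z by auto
  have "Z *\<^sub>v 0\<^sub>v k = 0\<^sub>v m"
    using Z by (intro eq_vecI) auto
  then have "(1\<^sub>m m - Z * transpose_mat Z) *\<^sub>v (Q *\<^sub>v z) = Q *\<^sub>v z"
    using projector_mult_vec[OF Z Qz] orth Qz by simp
  then have "vnorm (Q *\<^sub>v z) \<le> subspace_dist Q Z * vnorm (Q *\<^sub>v z)"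
    using subspace_dist_bound[OF Q Z z] by simp
  then have "vnorm (Q *\<^sub>v z) = 0"
    using dist vnorm_nonneg[of "Q *\<^sub>v z"] by (metis less_le_not_le mult_le_cancel_right1 not_le order_antisym)
  then have "z \<bullet> z = 0"
    using orthonormal_cols_sprod[OF Q z] vnorm_sq[of "Q *\<^sub>v z"] by simp
  then show ?thesis
    using sprod_self_eq_0_iff[OF z] by simp
qed

lemma colspace_mult_subset:
  assumes "A \<in> carrier_mat m n" "Y \<in> carrier_mat n p"
  shows "colspace (A * Y) \<subseteq> colspace A"
proof
  fix v assume "v \<in> colspace (A * Y)"
  then obtain x where "x \<in> carrier_vec p" "v = A *\<^sub>v (Y *\<^sub>v x)"
    unfolding colspace_def using assms by auto
  then show "v \<in> colspace A"
    unfolding colspace_def using assms by (auto intro!: exI[of _ "Y *\<^sub>v x"])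
qed

lemma colspace_subset_factor:
  fixes A X :: "real mat"
  assumes A: "A \<in> carrier_mat m n" and X: "X \<in> carrier_mat m b" and sub: "colspace X \<subseteq> colspace A"
  obtains W where "W \<in> carrier_mat n b" "X = A * W"
proof -
  have "\<exists>t. t \<in> carrier_vec n \<and> col X l = A *\<^sub>v t" if "l < b" for l
  proof -
    have "col X l = X *\<^sub>v unit_vec b l"
      using X that by (intro eq_vecI) auto
    moreover have "X *\<^sub>v unit_vec b l \<in> colspace X"
      unfolding colspace_def using X that by auto
    ultimately have "col X l \<in> colspace A"
      using sub by auto
    then show ?thesis
      unfolding colspace_def using A by auto
  qed
  then obtain T where T: "\<And>l. l < b \<Longrightarrow> T l \<in> carrier_vec n \<and> col X l = A *\<^sub>v T l"
    by metis
  define W where "W = mat_of_cols n (map T [0..<b])"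
  have W: "W \<in> carrier_mat n b"
    unfolding W_def by auto
  have "X = A * W"
  proof (rule eq_matI)
    fix i l assume "i < dim_row (A * W)" "l < dim_col (A * W)"
    then have il: "i < m" "l < b"
      using A W by auto
    have "col W l = T l"
      unfolding W_def using T il by (subst col_mat_of_cols) auto
    then have "(A * W) $$ (i,l) = (A *\<^sub>v T l) $ i"
      using A W il by simp
    also have "\<dots> = X $$ (i,l)"
      using T[OF il(2)] X il by (simp flip: T[OF il(2), THEN conjunct2])
    finally show "X $$ (i,l) = (A * W) $$ (i,l)" ..
  qed (use A W X in auto)
  with W that show ?thesis
    by blast
qed

lemma power_gram_mult:
  assumes A: "A \<in> carrier_mat m n"
  shows "(A * transpose_mat A) ^\<^sub>m q * A = A * (transpose_mat A * A) ^\<^sub>m q"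
proof (induction q)
  case (Suc q)
  have "(A * transpose_mat A) ^\<^sub>m Suc q * A = (A * transpose_mat A) ^\<^sub>m q * A * (transpose_mat A * A)"
    using A by (simp add: assoc_mult_mat[of _ m m _ m _ n] assoc_mult_mat[of _ m n _ m _ n]
        assoc_mult_mat[of _ m m _ n _ n])
  also have "\<dots> = A * (transpose_mat A * A) ^\<^sub>m Suc q"
    unfolding Suc using A by (simp add: assoc_mult_mat[of _ m n _ n _ n])
  finally show ?case .
qed (use A in simp)

lemma colspace_power_gram_factor:
  fixes A X :: "real mat"
  assumes A: "A \<in> carrier_mat m n" and \<Omega>: "\<Omega> \<in> carrier_mat n b" and X: "X \<in> carrier_mat m b"
    and range: "colspace X = colspace ((A * transpose_mat A) ^\<^sub>m q * A * \<Omega>)"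
  obtains W where "W \<in> carrier_mat n b" "X = A * W"
proof (rule colspace_subset_factor[OF A X])
  have "(A * transpose_mat A) ^\<^sub>m q * A * \<Omega> = A * ((transpose_mat A * A) ^\<^sub>m q * \<Omega>)"
    unfolding power_gram_mult[OF A] using A \<Omega> by (subst assoc_mult_mat[of _ m n _ n _ b]) auto
  moreover have "(transpose_mat A * A) ^\<^sub>m q * \<Omega> \<in> carrier_mat n b"
    using A \<Omega> by auto
  ultimately show "colspace X \<subseteq> colspace A"
    unfolding range using colspace_mult_subset[OF A] by simp
qed

section \<open>Deflating a matrix with known SVD\<close>

locale svd_decomposition =
  fixes A U S V :: "real mat" and m n :: nat
  assumes n_le_m: "n \<le> m"
    and U: "U \<in> carrier_mat m m" "transpose_mat U * U = 1\<^sub>m m"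
    and V: "V \<in> carrier_mat n n" "transpose_mat V * V = 1\<^sub>m n"
    and S: "S \<in> carrier_mat m n"
    and S_diag: "\<And>i j. i < m \<Longrightarrow> j < n \<Longrightarrow> i \<noteq> j \<Longrightarrow> S $$ (i,j) = 0"
    and S_nonneg: "\<And>i. i < n \<Longrightarrow> 0 \<le> S $$ (i,i)"
    and S_antimono: "\<And>i j. i \<le> j \<Longrightarrow> j < n \<Longrightarrow> S $$ (j,j) \<le> S $$ (i,i)"
    and svd: "A = U * S * transpose_mat V"
begin

lemma A_carrier: "A \<in> carrier_mat m n"
  unfolding svd using U V S by auto

lemma transpose_S_mult_S: "transpose_mat S * S = mat_of_diag n (\<lambda>r. (S $$ (r,r))\<^sup>2)"
proof (rule eq_matI)
  fix i j assume "i < dim_row (mat_of_diag n (\<lambda>r. (S $$ (r,r))\<^sup>2))" "j < dim_col (mat_of_diag n (\<lambda>r. (S $$ (r,r))\<^sup>2))"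
  then have ij: "i < n" "j < n"
    by auto
  then have "(transpose_mat S * S) $$ (i,j) = (\<Sum>r\<in>{0..<m}. S $$ (r,i) * S $$ (r,j))"
    using S by (simp add: scalar_prod_def)
  also have "\<dots> = (\<Sum>r\<in>{0..<m}. if r = i then (if i = j then (S $$ (i,i))\<^sup>2 else 0) else 0)"
    using ij by (intro sum.cong) (auto simp: S_diag power2_eq_square)
  finally show "(transpose_mat S * S) $$ (i,j) = mat_of_diag n (\<lambda>r. (S $$ (r,r))\<^sup>2) $$ (i,j)"
    using ij n_le_m by (simp add: mat_of_diag_def)
qed (use S in auto)

lemma gram_eq: "transpose_mat A * A = V * mat_of_diag n (\<lambda>r. (S $$ (r,r))\<^sup>2) * transpose_mat V"
proof -
  have "transpose_mat A * A = V * (transpose_mat (U * S) * (U * S)) * transpose_mat V"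
    unfolding svd using gram_mat_mult[of "U * S" m n "transpose_mat V" n] U V S by simp
  also have "transpose_mat (U * S) * (U * S) = transpose_mat S * S"
    using gram_mat_mult[OF U(1) S] U S by simp
  finally show ?thesis
    unfolding transpose_S_mult_S .
qed

lemma sing_vals_eq: "sing_vals A = map (\<lambda>j. S $$ (j,j)) [0..<n]"
proof -
  have "\<forall>i j. i \<le> j \<longrightarrow> j < n \<longrightarrow> (S $$ (j,j))\<^sup>2 \<le> (S $$ (i,i))\<^sup>2"
    using S_nonneg S_antimono by (auto intro: power_mono)
  then have "sing_vals A = map (\<lambda>j. sqrt ((S $$ (j,j))\<^sup>2)) [0..<n]"
    by (rule sing_vals_eq_sqrt_eigenvalues[OF A_carrier V gram_eq])
  also have "\<dots> = map (\<lambda>j. S $$ (j,j)) [0..<n]"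
    using S_nonneg by (intro map_cong) auto
  finally show ?thesis .
qed

lemma col_U_sprod_mult_vec:
  assumes r: "r < m" and x: "x \<in> carrier_vec n"
  shows "col U r \<bullet> (A *\<^sub>v x) = (if r < n then S $$ (r,r) * (col V r \<bullet> x) else 0)"
proof -
  define a where "a = transpose_mat V *\<^sub>v x"
  have a: "a \<in> carrier_vec n"
    unfolding a_def using V x by auto
  have "col U r \<bullet> (A *\<^sub>v x) = (transpose_mat U *\<^sub>v (U *\<^sub>v (S *\<^sub>v a))) $ r"
    unfolding svd a_def using U V S x r by (simp add: assoc_mult_mat_vec[of _ m n _ n] assoc_mult_mat_vec[of _ m m _ n])
  also have "\<dots> = (\<Sum>c\<in>{0..<n}. S $$ (r,c) * a $ c)"
    using orthonormal_cols_cancel[OF U] S a r by (simp add: scalar_prod_def)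
  also have "\<dots> = (\<Sum>c\<in>{0..<n}. if c = r then S $$ (r,r) * a $ r else 0)"
    using r by (intro sum.cong) (auto simp: S_diag)
  also have "\<dots> = (if r < n then S $$ (r,r) * (col V r \<bullet> x) else 0)"
    unfolding a_def using V x by simp
  finally show ?thesis .
qed

lemma vnorm_mult_vec_ge:
  assumes l: "l < n" and x: "x \<in> carrier_vec n"
    and orth: "\<And>r. l < r \<Longrightarrow> r < n \<Longrightarrow> col V r \<bullet> x = 0"
  shows "S $$ (l,l) * vnorm x \<le> vnorm (A *\<^sub>v x)"
proof -
  have "\<forall>i j. i \<le> j \<longrightarrow> j < n \<longrightarrow> (S $$ (j,j))\<^sup>2 \<le> (S $$ (i,i))\<^sup>2"
    using S_nonneg S_antimono by (auto intro: power_mono)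
  then have "(S $$ (l,l))\<^sup>2 * (x \<bullet> x) \<le> (\<Sum>r<n. (S $$ (r,r))\<^sup>2 * (col V r \<bullet> x)\<^sup>2)"
    unfolding orthogonal_mat_sprod_expansion[OF V x]
    by (rule weighted_sum_ge_head_weight[OF _ l]) (use orth in simp)
  also have "\<dots> = (A *\<^sub>v x) \<bullet> (A *\<^sub>v x)"
    by (rule sprod_mult_mat_vec_eigen_expansion[OF A_carrier V gram_eq x, symmetric])
  finally show ?thesis
    using S_nonneg[OF l] by (simp add: mult_vnorm_le_vnorm_iff)
qed

lemma vnorm_tail_le:
  assumes kl: "k \<le> l" "l < n" and x: "x \<in> carrier_vec n"
    and orth: "\<And>r. k \<le> r \<Longrightarrow> r < l \<Longrightarrow> col V r \<bullet> x = 0"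
  shows "vnorm ((1\<^sub>m m - first_cols k U * transpose_mat (first_cols k U)) *\<^sub>v (A *\<^sub>v x))
    \<le> S $$ (l,l) * vnorm x"
proof -
  define w where "w = A *\<^sub>v x"
  have w: "w \<in> carrier_vec m"
    unfolding w_def using A_carrier x by auto
  have km: "k \<le> m"
    using kl n_le_m by simp
  note Uk = first_cols_orthonormal[OF U km]
  define g where "g r = (col U r \<bullet> w)\<^sup>2" for r
  have "((1\<^sub>m m - first_cols k U * transpose_mat (first_cols k U)) *\<^sub>v w) \<bullet>
      ((1\<^sub>m m - first_cols k U * transpose_mat (first_cols k U)) *\<^sub>v w) = (\<Sum>r<m. g r) - (\<Sum>r<k. g r)"
    unfolding projector_sprod[OF Uk(1,3) w] orthogonal_mat_sprod_expansion[OF U w] g_def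
      transpose_first_cols_mult_vec[OF U km w] by (simp add: sprod_self_eq_sum[of _ k])
  also have "\<dots> = (\<Sum>r\<in>{k..<m}. g r)"
    using sum.atLeastLessThan_concat[of 0 k m g] km by (simp add: lessThan_atLeast0)
  also have "\<dots> = (\<Sum>r\<in>{k..<n}. (S $$ (r,r))\<^sup>2 * (col V r \<bullet> x)\<^sup>2)"
    using n_le_m unfolding g_def w_def
    by (subst sum.mono_neutral_right[of "{k..<m}" "{k..<n}"]) (auto simp: col_U_sprod_mult_vec x power_mult_distrib)
  also have "\<dots> \<le> (\<Sum>r\<in>{k..<n}. (S $$ (l,l))\<^sup>2 * (col V r \<bullet> x)\<^sup>2)"
  proof (rule sum_mono)
    fix r assume r: "r \<in> {k..<n}"
    show "(S $$ (r,r))\<^sup>2 * (col V r \<bullet> x)\<^sup>2 \<le> (S $$ (l,l))\<^sup>2 * (col V r \<bullet> x)\<^sup>2"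
      using orth[of r] r S_nonneg S_antimono[of l r] by (cases "r < l") (auto intro!: mult_right_mono power_mono)
  qed
  also have "\<dots> \<le> (S $$ (l,l))\<^sup>2 * (\<Sum>r<n. (col V r \<bullet> x)\<^sup>2)"
    unfolding sum_distrib_left by (intro sum_mono2) auto
  finally show ?thesis
    unfolding w_def orthogonal_mat_sprod_expansion[OF V x, symmetric]
    using S_nonneg kl by (simp add: vnorm_le_mult_vnorm_iff)
qed

end

locale deflation = svd_decomposition +
  fixes Q :: "real mat" and b :: nat
  assumes Q: "Q \<in> carrier_mat m b" "transpose_mat Q * Q = 1\<^sub>m b"
begin

definition B :: "real mat" where
  "B = (1\<^sub>m m - Q * transpose_mat Q) * A"

lemma B_carrier: "B \<in> carrier_mat m n"
  unfolding B_def using A_carrier Q by auto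

lemma B_mult_vec:
  assumes "x \<in> carrier_vec n"
  shows "B *\<^sub>v x = (1\<^sub>m m - Q * transpose_mat Q) *\<^sub>v (A *\<^sub>v x)"
  unfolding B_def using A_carrier Q assms by (subst assoc_mult_mat_vec[of _ m m _ n]) auto

lemma sing_val_B_ge:
  assumes l: "b \<le> l" "l < n"
  shows "S $$ (l,l) \<le> sing_vals B ! (l - b)"
proof (rule sing_val_ge_of_witnesses[OF B_carrier])
  fix F :: "real vec set"
  assume F: "F \<subseteq> carrier_vec n" "finite F" "card F \<le> l - b"
  \<comment> \<open>besides \<open>F\<close>, force \<open>Q\<^sup>T A x = 0\<close> and \<open>x \<in> span {col V 0, \<dots>, col V l}\<close>\<close>
  define G where "G = F \<union> col V ` {l<..<n} \<union> (\<lambda>r. transpose_mat A *\<^sub>v col Q r) ` {..<b}"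
  have "card G \<le> card F + card (col V ` {l<..<n}) + card ((\<lambda>r. transpose_mat A *\<^sub>v col Q r) ` {..<b})"
    unfolding G_def by (meson card_Un_le add_right_mono order_trans)
  also have "\<dots> < n"
    using F(3) l card_image_le[of "{l<..<n}" "col V"] card_image_le[of "{..<b}" "\<lambda>r. transpose_mat A *\<^sub>v col Q r"]
    by simp
  finally have "card G < n" .
  moreover have "G \<subseteq> carrier_vec n" "finite G"
    unfolding G_def using F V A_carrier Q by auto
  ultimately obtain x where x: "x \<in> carrier_vec n" "x \<noteq> 0\<^sub>v n" and orth: "\<And>g. g \<in> G \<Longrightarrow> g \<bullet> x = 0"
    using exists_nonzero_orthogonal by metis
  have "transpose_mat Q *\<^sub>v (A *\<^sub>v x) = 0\<^sub>v b"
  proof (rule eq_vecI)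
    fix r assume "r < dim_vec (0\<^sub>v b :: real vec)"
    then have "(transpose_mat A *\<^sub>v col Q r) \<bullet> x = 0"
      using orth unfolding G_def by simp
    then show "(transpose_mat Q *\<^sub>v (A *\<^sub>v x)) $ r = 0\<^sub>v b $ r"
      using sprod_mult_mat_vec[OF A_carrier x(1), of "col Q r"] \<open>r < dim_vec (0\<^sub>v b)\<close> Q by simp
  qed (use Q in simp)
  then have "B *\<^sub>v x = A *\<^sub>v x"
    using B_mult_vec[OF x(1)] projector_mult_vec[OF Q(1), of "A *\<^sub>v x"] A_carrier Q x
    by auto
  moreover have "S $$ (l,l) * vnorm x \<le> vnorm (A *\<^sub>v x)"
    using orth unfolding G_def by (intro vnorm_mult_vec_ge[OF l(2) x(1)]) auto
  ultimately show "\<exists>x\<in>carrier_vec n. x \<noteq> 0\<^sub>v n \<and> (\<forall>f\<in>F. f \<bullet> x = 0) \<and> S $$ (l,l) * vnorm x \<le> vnorm (B *\<^sub>v x)"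
    using x orth unfolding G_def by auto
qed (use l S_nonneg in auto)

lemma sing_val_B_le_0_if_range_subset:
  assumes range: "Q = A * W" "W \<in> carrier_mat n b" and b: "0 < b" "b \<le> n"
  shows "sing_vals B ! (n - b) \<le> 0"
proof (rule sing_val_le_of_witnesses[OF B_carrier])
  fix F :: "real vec set"
  assume F: "F \<subseteq> carrier_vec n" "finite F" "n - b + card F < n"
  have "card ((\<lambda>f. transpose_mat W *\<^sub>v f) ` F) < b"
    using F b card_image_le[OF F(2), of "\<lambda>f. transpose_mat W *\<^sub>v f"] by linarith
  moreover have "(\<lambda>f. transpose_mat W *\<^sub>v f) ` F \<subseteq> carrier_vec b" "finite ((\<lambda>f. transpose_mat W *\<^sub>v f) ` F)"
    using F range(2) by auto
  ultimately obtain z where z: "z \<in> carrier_vec b" "z \<noteq> 0\<^sub>v b"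
    and orth: "\<And>f. f \<in> F \<Longrightarrow> (transpose_mat W *\<^sub>v f) \<bullet> z = 0"
    using exists_nonzero_orthogonal by (metis image_eqI)
  define x where "x = W *\<^sub>v z"
  have x: "x \<in> carrier_vec n"
    unfolding x_def using range(2) z by auto
  have Ax: "A *\<^sub>v x = Q *\<^sub>v z"
    unfolding x_def range(1) using A_carrier range(2) z by simp
  have "x \<noteq> 0\<^sub>v n"
  proof
    assume "x = 0\<^sub>v n"
    then have "Q *\<^sub>v z = 0\<^sub>v m"
      unfolding Ax[symmetric] using A_carrier by (intro eq_vecI) auto
    then have "z \<bullet> z = 0"
      using orthonormal_cols_sprod[OF Q z(1)] by simp
    with z show False
      using sprod_self_eq_0_iff by blast
  qed
  moreover have "f \<bullet> x = 0" if "f \<in> F" for f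
    using orth[OF that] sprod_mult_mat_vec[OF range(2) z(1), of f] F that unfolding x_def by auto
  moreover have "B *\<^sub>v x = 0\<^sub>v m"
    using B_mult_vec[OF x] projector_mult_range[OF Q z(1)] unfolding Ax by simp
  ultimately show "\<exists>x\<in>carrier_vec n. x \<noteq> 0\<^sub>v n \<and> (\<forall>f\<in>F. f \<bullet> x = 0) \<and> vnorm (B *\<^sub>v x) \<le> 0 * vnorm x"
    using x by (auto simp: vnorm_def)
qed (use b in auto)

lemma vnorm_B_mult_vec_le:
  assumes kl: "k \<le> l" "l < n" and x: "x \<in> carrier_vec n" and z: "z \<in> carrier_vec b"
    and orth: "\<And>r. k \<le> r \<Longrightarrow> r < l \<Longrightarrow> col V r \<bullet> x = 0"
    and match: "transpose_mat (first_cols k U) *\<^sub>v (A *\<^sub>v x) = transpose_mat (first_cols k U) *\<^sub>v (Q *\<^sub>v z)"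
    and e: "0 \<le> \<epsilon>"
    and close: "vnorm ((1\<^sub>m m - first_cols k U * transpose_mat (first_cols k U)) *\<^sub>v (Q *\<^sub>v z))
      \<le> \<epsilon> * vnorm (Q *\<^sub>v z)"
  shows "vnorm (B *\<^sub>v x) \<le> (S $$ (l,l) + \<epsilon> * norm2 A) * vnorm x"
proof -
  define Uk where "Uk = first_cols k U"
  define P Pk where "P = 1\<^sub>m m - Q * transpose_mat Q" and "Pk = Uk * transpose_mat Uk"
  have Uk: "Uk \<in> carrier_mat m k" "transpose_mat Uk * Uk = 1\<^sub>m k"
    unfolding Uk_def using first_cols_orthonormal[OF U] kl n_le_m by simp_all
  define w where "w = A *\<^sub>v x"
  have w: "w \<in> carrier_vec m" and Qz: "Q *\<^sub>v z \<in> carrier_vec m"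
    unfolding w_def using A_carrier x Q z by auto
  \<comment> \<open>on \<open>R(U\<^sub>k)\<close>, \<open>A x\<close> agrees with \<open>Q z\<close>; on its complement it is small by the SVD\<close>
  have Pk_w: "Pk *\<^sub>v w = Pk *\<^sub>v (Q *\<^sub>v z)"
    using match unfolding Pk_def Uk_def[symmetric] w_def[symmetric] using Uk w Qz
    by (simp add: assoc_mult_mat_vec[of _ m k _ m])
  have "B *\<^sub>v x = P *\<^sub>v (Pk *\<^sub>v w + (1\<^sub>m m - Pk) *\<^sub>v w)"
    unfolding B_mult_vec[OF x] P_def Pk_def w_def[symmetric] projector_add_complement[OF Uk(1) w] ..
  also have "\<dots> = P *\<^sub>v (Pk *\<^sub>v (Q *\<^sub>v z)) + P *\<^sub>v ((1\<^sub>m m - Pk) *\<^sub>v w)"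
    unfolding Pk_w using w Qz Uk(1) Q unfolding P_def Pk_def
    by (subst mult_add_distrib_mat_vec[of _ m m]) (auto intro!: carrier_vecI)
  finally have Bx: "B *\<^sub>v x = P *\<^sub>v (Pk *\<^sub>v (Q *\<^sub>v z)) + P *\<^sub>v ((1\<^sub>m m - Pk) *\<^sub>v w)" .
  have "vnorm (P *\<^sub>v (Pk *\<^sub>v (Q *\<^sub>v z))) \<le> \<epsilon> * vnorm (Pk *\<^sub>v (Q *\<^sub>v z))"
    unfolding P_def Pk_def by (rule projection_range_close[OF Q Uk z e close[folded Uk_def]])
  also have "\<dots> \<le> \<epsilon> * (norm2 A * vnorm x)"
    unfolding Pk_w[symmetric] using vnorm_projection_le[OF Uk w] vnorm_mult_mat_vec_le_norm2[OF A_carrier x] e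
    unfolding Pk_def w_def by (intro mult_left_mono) auto
  moreover have "vnorm (P *\<^sub>v ((1\<^sub>m m - Pk) *\<^sub>v w)) \<le> S $$ (l,l) * vnorm x"
  proof -
    have "(1\<^sub>m m - Pk) *\<^sub>v w \<in> carrier_vec m"
      unfolding Pk_def using Uk(1) w by (intro mult_mat_vec_carrier[of _ m m]) auto
    then show ?thesis
      using projector_vnorm_le[OF Q] vnorm_tail_le[OF kl x orth]
      unfolding P_def Pk_def Uk_def w_def by (meson order.trans)
  qed
  moreover have "P *\<^sub>v (Pk *\<^sub>v (Q *\<^sub>v z)) \<in> carrier_vec m" "P *\<^sub>v ((1\<^sub>m m - Pk) *\<^sub>v w) \<in> carrier_vec m"
    unfolding P_def using Q by (auto intro!: carrier_vecI)
  ultimately show ?thesis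
    unfolding Bx using vnorm_triangle[of "P *\<^sub>v (Pk *\<^sub>v (Q *\<^sub>v z))" m "P *\<^sub>v ((1\<^sub>m m - Pk) *\<^sub>v w)"]
    by (simp add: algebra_simps)
qed

lemma exists_matching_pair:
  assumes kl: "k \<le> l" "l \<le> n" and F: "F \<subseteq> carrier_vec n" "finite F" "card F + l < n + b"
  obtains x z where "x \<in> carrier_vec n" "z \<in> carrier_vec b" "x \<noteq> 0\<^sub>v n \<or> z \<noteq> 0\<^sub>v b"
    "\<And>f. f \<in> F \<Longrightarrow> f \<bullet> x = 0" "\<And>r. k \<le> r \<Longrightarrow> r < l \<Longrightarrow> col V r \<bullet> x = 0"
    "transpose_mat (first_cols k U) *\<^sub>v (A *\<^sub>v x) = transpose_mat (first_cols k U) *\<^sub>v (Q *\<^sub>v z)"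
proof -
  define Uk where "Uk = first_cols k U"
  have Uk: "Uk \<in> carrier_mat m k"
    unfolding Uk_def using first_cols_orthonormal[OF U] kl n_le_m by simp
  \<comment> \<open>requiring \<open>U\<^sub>k\<^sup>T A x = U\<^sub>k\<^sup>T Q z\<close> costs only \<open>k\<close> constraints on \<open>(x, z) \<in> \<real>\<^sup>n \<times> \<real>\<^sup>b\<close>\<close>
  define G where "G = (\<lambda>f. (f, 0\<^sub>v b)) ` F \<union> (\<lambda>r. (col V r, 0\<^sub>v b)) ` {k..<l}
    \<union> (\<lambda>r. (transpose_mat A *\<^sub>v col Uk r, transpose_mat Q *\<^sub>v col Uk r)) ` {..<k}"
  have "card G \<le> card F + card {k..<l} + card {..<k}"
    unfolding G_def by (intro order.trans[OF card_Un_le] add_mono card_image_le) (auto simp: F(2))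
  also have "\<dots> < n + b"
    using F(3) kl by simp
  finally have "card G < n + b" .
  moreover have "G \<subseteq> carrier_vec n \<times> carrier_vec b" "finite G"
    unfolding G_def using F V Uk A_carrier Q by auto
  ultimately obtain x z where x: "x \<in> carrier_vec n" and z: "z \<in> carrier_vec b"
    and xz: "x \<noteq> 0\<^sub>v n \<or> z \<noteq> 0\<^sub>v b" and orth: "\<And>f g. (f, g) \<in> G \<Longrightarrow> f \<bullet> x = g \<bullet> z"
    using exists_nonzero_orthogonal_pair by metis
  have "transpose_mat Uk *\<^sub>v (A *\<^sub>v x) = transpose_mat Uk *\<^sub>v (Q *\<^sub>v z)"
  proof (rule eq_vecI)
    fix r assume "r < dim_vec (transpose_mat Uk *\<^sub>v (Q *\<^sub>v z))"
    then show "(transpose_mat Uk *\<^sub>v (A *\<^sub>v x)) $ r = (transpose_mat Uk *\<^sub>v (Q *\<^sub>v z)) $ r"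
      using orth[of "transpose_mat A *\<^sub>v col Uk r" "transpose_mat Q *\<^sub>v col Uk r"] Uk
        sprod_mult_mat_vec[OF A_carrier x, of "col Uk r"] sprod_mult_mat_vec[OF Q(1) z, of "col Uk r"]
      unfolding G_def by auto
  qed (use Uk in simp)
  moreover have "f \<bullet> x = 0" if "f \<in> F" for f
    using orth[of f "0\<^sub>v b"] that z unfolding G_def by auto
  moreover have "col V r \<bullet> x = 0" if "k \<le> r" "r < l" for r
    using orth[of "col V r" "0\<^sub>v b"] that z unfolding G_def by auto
  ultimately show ?thesis
    using that x z xz unfolding Uk_def by blast
qed

lemma sing_val_B_le:
  assumes kl: "b \<le> k" "k \<le> l" "l < n" and dist: "subspace_dist Q (first_cols k U) < 1"
  shows "sing_vals B ! (l - b) \<le> S $$ (l,l) + subspace_dist Q (first_cols k U) * norm2 A"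
proof (rule sing_val_le_of_witnesses[OF B_carrier])
  fix F :: "real vec set"
  assume F: "F \<subseteq> carrier_vec n" "finite F" "l - b + card F < n"
  define Uk where "Uk = first_cols k U"
  have Uk: "Uk \<in> carrier_mat m k"
    unfolding Uk_def using first_cols_orthonormal[OF U] kl n_le_m by simp
  obtain x z where x: "x \<in> carrier_vec n" and z: "z \<in> carrier_vec b" and xz: "x \<noteq> 0\<^sub>v n \<or> z \<noteq> 0\<^sub>v b"
    and F_x: "\<And>f. f \<in> F \<Longrightarrow> f \<bullet> x = 0" and V_x: "\<And>r. k \<le> r \<Longrightarrow> r < l \<Longrightarrow> col V r \<bullet> x = 0"
    and match: "transpose_mat Uk *\<^sub>v (A *\<^sub>v x) = transpose_mat Uk *\<^sub>v (Q *\<^sub>v z)"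
  proof -
    have "card F + l < n + b"
      using F(3) kl by linarith
    then show ?thesis
      using exists_matching_pair[OF kl(2) less_imp_le[OF kl(3)] F(1,2)] that unfolding Uk_def by blast
  qed
  have "x \<noteq> 0\<^sub>v n"
  proof
    assume x0: "x = 0\<^sub>v n"
    then have "A *\<^sub>v x = 0\<^sub>v m"
      using A_carrier by (intro eq_vecI) auto
    then have "transpose_mat Uk *\<^sub>v (Q *\<^sub>v z) = 0\<^sub>v k"
      unfolding match[symmetric] using Uk by (intro eq_vecI) (auto simp: scalar_prod_def)
    then show False
      using subspace_dist_less_1_orthogonal[OF Q Uk z] dist xz x0 unfolding Uk_def by blast
  qed
  moreover have "vnorm (B *\<^sub>v x) \<le> (S $$ (l,l) + subspace_dist Q Uk * norm2 A) * vnorm x"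
  proof (rule vnorm_B_mult_vec_le[OF kl(2,3) x z V_x match[unfolded Uk_def]])
    show "0 \<le> subspace_dist Q Uk"
      unfolding subspace_dist_def using Q Uk kl n_le_m by (intro norm2_nonneg[of _ m m]) auto
  qed (use subspace_dist_bound[OF Q Uk z] in \<open>auto simp: Uk_def\<close>)
  ultimately show "\<exists>x\<in>carrier_vec n. x \<noteq> 0\<^sub>v n \<and> (\<forall>f\<in>F. f \<bullet> x = 0) \<and>
      vnorm (B *\<^sub>v x) \<le> (S $$ (l,l) + subspace_dist Q (first_cols k U) * norm2 A) * vnorm x"
    using x F_x unfolding Uk_def by blast
qed (use kl in auto)

lemma rank_theta_B:
  assumes bk: "b \<le> k" "k \<le> n" and theta: "0 < \<theta>" and above: "0 < k \<Longrightarrow> \<theta> < S $$ (k - 1, k - 1)"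
    and dist: "subspace_dist Q (first_cols k U) < 1"
    and below: "k < n \<Longrightarrow> S $$ (k,k) + subspace_dist Q (first_cols k U) * norm2 A < \<theta>"
    and range: "Q = A * W" "W \<in> carrier_mat n b"
  shows "rank_theta \<theta> B = k - b"
proof (rule rank_theta_eqI[OF length_sing_vals[OF B_carrier]])
  fix j assume j: "j < k - b"
  have "\<theta> < S $$ (k - 1, k - 1)"
    using above j by simp
  also have "\<dots> \<le> S $$ (j + b, j + b)"
    using S_antimono j bk by simp
  also have "\<dots> \<le> sing_vals B ! j"
    using sing_val_B_ge[of "j + b"] j bk by simp
  finally show "\<theta> < sing_vals B ! j" .
next
  fix j assume j: "k - b \<le> j" "j < n"
  show "sing_vals B ! j \<le> \<theta>"
  proof (cases "k < n")
    case True
    have "sing_vals B ! j \<le> sing_vals B ! (k - b)"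
      using sing_vals_antimono[OF B_carrier j] .
    also have "\<dots> \<le> S $$ (k,k) + subspace_dist Q (first_cols k U) * norm2 A"
      using sing_val_B_le[OF bk(1) order.refl True dist] .
    finally show ?thesis
      using below[OF True] by simp
  next
    case False
    then have "sing_vals B ! j \<le> sing_vals B ! (n - b)"
      using sing_vals_antimono[OF B_carrier _ j(2)] j bk by simp
    also have "\<dots> \<le> 0"
      using sing_val_B_le_0_if_range_subset[OF range] j bk False by simp
    finally show ?thesis
      using theta by simp
  qed
qed (use bk in simp)

end

theorem theorem3p4:
  fixes A U S V \<Omega> Qh Uh :: "real mat"
    and m n k b q :: nat and \<theta> :: real
  assumes dims: "n \<le> m" "A \<in> carrier_mat m n"
    (* full SVD  A = U S V^T *)
    and U: "U \<in> carrier_mat m m" "transpose_mat U * U = 1\<^sub>m m"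
    and V: "V \<in> carrier_mat n n" "transpose_mat V * V = 1\<^sub>m n"
    and S: "S \<in> carrier_mat m n" "\<And>i j. i < m \<Longrightarrow> j < n \<Longrightarrow> i \<noteq> j \<Longrightarrow> S $$ (i,j) = 0"
           "\<And>i. i < n \<Longrightarrow> S $$ (i,i) \<ge> 0"
           "\<And>i j. i \<le> j \<Longrightarrow> j < n \<Longrightarrow> S $$ (j,j) \<le> S $$ (i,i)"
    and svd: "A = U * S * transpose_mat V"
    (* sigma_1 >= ... >= sigma_k > theta > sigma_{k+1} >= ... >= sigma_n, sigma_i = S(i-1,i-1) *)
    and theta: "\<theta> > 0" "k \<le> n"
           "\<And>i. 1 \<le> i \<Longrightarrow> i \<le> k \<Longrightarrow> S $$ (i-1,i-1) > \<theta>"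
           "\<And>i. k < i \<Longrightarrow> i \<le> n \<Longrightarrow> S $$ (i-1,i-1) < \<theta>"
    and bk: "b \<le> k"
    and Omega: "\<Omega> \<in> carrier_mat n b"
    and Qh: "Qh \<in> carrier_mat m b" "transpose_mat Qh * Qh = 1\<^sub>m b"
            "colspace Qh = colspace ((A * transpose_mat A) ^\<^sub>m q * A * \<Omega>)"
    and Uh: "Uh \<in> carrier_mat b b" "transpose_mat Uh * Uh = 1\<^sub>m b"
            "\<exists>lam::nat \<Rightarrow> real.
               (\<forall>i j. i \<le> j \<longrightarrow> j < b \<longrightarrow> lam j \<le> lam i) \<and>
               (\<forall>j < b. (transpose_mat Qh * A * transpose_mat A * Qh) *\<^sub>v col Uh j
                          = lam j \<cdot>\<^sub>v col Uh j)"
    and eps_lt: "subspace_dist (Qh * Uh) (first_cols k U) < 1"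
    and gap_hi: "1 \<le> k \<Longrightarrow>
                 S $$ (k-1,k-1) - subspace_dist (Qh * Uh) (first_cols k U) * norm2 A > \<theta>"
    and gap_lo: "k < n \<Longrightarrow>
                 \<theta> > S $$ (k,k) + subspace_dist (Qh * Uh) (first_cols k U) * norm2 A"
  shows "(\<forall>i. 1 \<le> i \<longrightarrow> i \<le> n - k \<longrightarrow>
            \<bar>sval (k - b + i) ((1\<^sub>m m - (Qh * Uh) * transpose_mat (Qh * Uh)) * A)
               - S $$ (k+i-1, k+i-1)\<bar>
            \<le> subspace_dist (Qh * Uh) (first_cols k U) * norm2 A)
       \<and> int (rank_theta \<theta> ((1\<^sub>m m - (Qh * Uh) * transpose_mat (Qh * Uh)) * A))
           = int (rank_theta \<theta> A) - int b"
proof -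
  define Q where "Q = Qh * Uh"
  have Q: "Q \<in> carrier_mat m b" "transpose_mat Q * Q = 1\<^sub>m b"
    unfolding Q_def using gram_mat_mult[OF Qh(1) Uh(1)] Qh Uh by auto
  interpret deflation A U S V m n Q b
    by unfold_locales (use dims U V S svd Q in auto)
  define \<epsilon> where "\<epsilon> = subspace_dist Q (first_cols k U)"
  obtain W where W: "W \<in> carrier_mat n b" "Qh = A * W"
    using colspace_power_gram_factor[OF A_carrier Omega Qh(1,3)] .
  have "Q = A * (W * Uh)"
    unfolding Q_def W(2) using A_carrier W(1) Uh(1) by (rule assoc_mult_mat)
  then have rank_B: "rank_theta \<theta> B = k - b"
    using W(1) Uh(1) theta(3)[of k]
    by (intro rank_theta_B[where W = "W * Uh", OF bk theta(2,1) _ eps_lt[folded Q_def] gap_lo[folded Q_def]]) auto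
  have rank_A: "rank_theta \<theta> A = k"
    using theta(3)[of "Suc _"] theta(4)[of "Suc _"] theta(2)
    by (intro rank_theta_eqI[OF length_sing_vals[OF A_carrier]]) (auto simp: sing_vals_eq less_imp_le)
  have "\<bar>sval (k - b + i) B - S $$ (k + i - 1, k + i - 1)\<bar> \<le> \<epsilon> * norm2 A" if "1 \<le> i" "i \<le> n - k" for i
    using sing_val_B_ge[of "k + i - 1"] sing_val_B_le[of k "k + i - 1"] that bk theta(2) eps_lt
    unfolding sval_def \<epsilon>_def Q_def by (simp add: abs_le_iff algebra_simps)
  then show ?thesis
    using rank_A rank_B bk unfolding B_def[symmetric] \<epsilon>_def[symmetric] Q_def[symmetric] by simp
qed

end
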